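(* Let $\mathcal A$ be the set of triples $(\mathfrak g,\theta,h)$ with $\mathfrak g$ a semisimple real Lie algebra, $h$ an Euler element of $\mathfrak g$ and $\theta$ a Cartan involution with $\theta(h)=-h$; let $\mathcal B$ be the set of triples $(\mathfrak g,\tau,z)$ with $\mathfrak g$ semisimple, $z$ an H-element of $\mathfrak g$ and $\tau$ an involution of $\mathfrak g$ with $\tau(z)=-z$. Then $\Phi(\mathfrak g,\theta,h):=(\mathfrak g^c,\tau^c,ih)$, where $\tau:=\tau_h\theta$, $\mathfrak g^c:=\mathfrak g^\tau+i\mathfrak g^{-\tau}\subseteq\mathfrak g_{\mathbb C}$ and $\tau^c(x+iy)=x-iy$, defines a bijection $\Phi:\mathcal A\to\mathcal B$.
   Context: Euler element: $\mathrm{ad}\,h\ne0$ diagonalizable with spectrum in $\{-1,0,1\}$; $\tau_h=e^{\pi i\,\mathrm{ad}\,h}$ acts by $(-1)^j$ on the $j$-eigenspace of $\mathrm{ad}\,h$. An element $z$ of a reductive Lie algebra $\mathfrak l$ is an H-element if $iz$ is an Euler element of $\mathfrak l_{\mathbb C}$ and $\ker(\mathrm{ad}\,z)$ is maximal compactly embedded in $\mathfrak l$ (equivalently $e^{\pi\,\mathrm{ad}\,z}$ restricts to a Cartan involution of $[\mathfrak l,\mathfrak l]$). *)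

theory Defs
  imports "HOL-Analysis.Analysis"
begin

text \<open>Ambient setting: a finite-dimensional complex Lie algebra L, realised as
  complex^'n with a complex-bilinear bracket br. Real Lie algebras are real
  forms g of L (so L = g_C); real subspaces use the real vector space structure
  of complex^'n (scaleR).\<close>

definition complex_lie :: "(complex^'n \<Rightarrow> complex^'n \<Rightarrow> complex^'n) \<Rightarrow> bool" where
  "complex_lie br \<longleftrightarrow>
     (\<forall>x y z. br (x + y) z = br x z + br y z) \<and>
     (\<forall>x y z. br x (y + z) = br x y + br x z) \<and>
     (\<forall>c x y. br (c *s x) y = c *s br x y) \<and>
     (\<forall>c x y. br x (c *s y) = c *s br x y) \<and>
     (\<forall>x. br x x = 0) \<and>
     (\<forall>x y z. br x (br y z) + br y (br z x) + br z (br x y) = 0)"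

definition real_form :: "(complex^'n \<Rightarrow> complex^'n \<Rightarrow> complex^'n) \<Rightarrow> (complex^'n) set \<Rightarrow> bool" where
  "real_form br g \<longleftrightarrow> subspace g \<and> (\<forall>x\<in>g. \<forall>y\<in>g. br x y \<in> g) \<and>
     (\<forall>v. \<exists>!p. fst p \<in> g \<and> snd p \<in> g \<and> v = fst p + \<i> *s snd p)"

definition lie_ideal :: "(complex^'n \<Rightarrow> complex^'n \<Rightarrow> complex^'n) \<Rightarrow> (complex^'n) set \<Rightarrow> (complex^'n) set \<Rightarrow> bool" where
  "lie_ideal br g I \<longleftrightarrow> subspace I \<and> I \<subseteq> g \<and> (\<forall>x\<in>g. \<forall>y\<in>I. br x y \<in> I)"

definition derived :: "(complex^'n \<Rightarrow> complex^'n \<Rightarrow> complex^'n) \<Rightarrow> (complex^'n) set \<Rightarrow> (complex^'n) set" where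
  "derived br S = span {br x y | x y. x \<in> S \<and> y \<in> S}"

definition solvable_lie :: "(complex^'n \<Rightarrow> complex^'n \<Rightarrow> complex^'n) \<Rightarrow> (complex^'n) set \<Rightarrow> bool" where
  "solvable_lie br I \<longleftrightarrow> (\<exists>k. (derived br ^^ k) I = {0})"

definition semisimple :: "(complex^'n \<Rightarrow> complex^'n \<Rightarrow> complex^'n) \<Rightarrow> (complex^'n) set \<Rightarrow> bool" where
  "semisimple br g \<longleftrightarrow> (\<forall>I. lie_ideal br g I \<and> solvable_lie br I \<longrightarrow> I = {0})"

definition trace_on :: "(complex^'n) set \<Rightarrow> (complex^'n \<Rightarrow> complex^'n) \<Rightarrow> real" where
  "trace_on S f = (let B = (SOME B. independent B \<and> span B = S) in
                     \<Sum>b\<in>B. representation B (f b) b)"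

definition killing :: "(complex^'n \<Rightarrow> complex^'n \<Rightarrow> complex^'n) \<Rightarrow> (complex^'n) set \<Rightarrow> complex^'n \<Rightarrow> complex^'n \<Rightarrow> real" where
  "killing br S x y = trace_on S (\<lambda>v. br x (br y v))"

definition lie_involution :: "(complex^'n \<Rightarrow> complex^'n \<Rightarrow> complex^'n) \<Rightarrow> (complex^'n) set \<Rightarrow> (complex^'n \<Rightarrow> complex^'n) \<Rightarrow> bool" where
  "lie_involution br S f \<longleftrightarrow> (\<forall>x\<in>S. f x \<in> S) \<and>
     (\<forall>x\<in>S. \<forall>y\<in>S. f (x + y) = f x + f y) \<and>
     (\<forall>x\<in>S. \<forall>r::real. f (r *\<^sub>R x) = r *\<^sub>R f x) \<and>
     (\<forall>x\<in>S. \<forall>y\<in>S. f (br x y) = br (f x) (f y)) \<and>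
     (\<forall>x\<in>S. f (f x) = x)"

definition cartan_involution :: "(complex^'n \<Rightarrow> complex^'n \<Rightarrow> complex^'n) \<Rightarrow> (complex^'n) set \<Rightarrow> (complex^'n \<Rightarrow> complex^'n) \<Rightarrow> bool" where
  "cartan_involution br S f \<longleftrightarrow> lie_involution br S f \<and>
     (\<forall>x\<in>S. x \<noteq> 0 \<longrightarrow> - killing br S x (f x) > 0)"

definition eigsp :: "(complex^'n \<Rightarrow> complex^'n \<Rightarrow> complex^'n) \<Rightarrow> (complex^'n) set \<Rightarrow> complex^'n \<Rightarrow> real \<Rightarrow> (complex^'n) set" where
  "eigsp br S h j = {y \<in> S. br h y = j *\<^sub>R y}"

text \<open>Euler element of the Lie algebra S (S = g real, or S = UNIV = L complex):
  ad h nonzero, diagonalizable with spectrum in {-1,0,1}.\<close>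
definition euler_elem :: "(complex^'n \<Rightarrow> complex^'n \<Rightarrow> complex^'n) \<Rightarrow> (complex^'n) set \<Rightarrow> complex^'n \<Rightarrow> bool" where
  "euler_elem br S h \<longleftrightarrow> h \<in> S \<and> (\<exists>y\<in>S. br h y \<noteq> 0) \<and>
     (\<forall>v\<in>S. \<exists>a b c. a \<in> eigsp br S h (-1) \<and> b \<in> eigsp br S h 0 \<and> c \<in> eigsp br S h 1 \<and> v = a + b + c)"

definition tau_h :: "(complex^'n \<Rightarrow> complex^'n \<Rightarrow> complex^'n) \<Rightarrow> (complex^'n) set \<Rightarrow> complex^'n \<Rightarrow> complex^'n \<Rightarrow> complex^'n" where
  "tau_h br S h v = (THE w. \<exists>a b c. a \<in> eigsp br S h (-1) \<and> b \<in> eigsp br S h 0 \<and>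
       c \<in> eigsp br S h 1 \<and> v = a + b + c \<and> w = - a + b - c)"

definition exp_ad :: "(complex^'n \<Rightarrow> complex^'n \<Rightarrow> complex^'n) \<Rightarrow> real \<Rightarrow> complex^'n \<Rightarrow> complex^'n \<Rightarrow> complex^'n" where
  "exp_ad br t z v = (\<Sum>k. (t ^ k / fact k) *\<^sub>R ((br z ^^ k) v))"

text \<open>H-element of g (g a real form of L, so g_C = L = UNIV): i z is an Euler element
  of L and e^{pi ad z} restricts to a Cartan involution of [g,g].\<close>
definition H_elem :: "(complex^'n \<Rightarrow> complex^'n \<Rightarrow> complex^'n) \<Rightarrow> (complex^'n) set \<Rightarrow> complex^'n \<Rightarrow> bool" where
  "H_elem br g z \<longleftrightarrow> z \<in> g \<and> euler_elem br UNIV (\<i> *s z) \<and>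
     cartan_involution br (derived br g) (exp_ad br pi z)"

text \<open>Maps on g are represented extensionally: value 0 outside g.\<close>
definition extensional0 :: "(complex^'n) set \<Rightarrow> (complex^'n \<Rightarrow> complex^'n) \<Rightarrow> bool" where
  "extensional0 S f \<longleftrightarrow> (\<forall>v. v \<notin> S \<longrightarrow> f v = 0)"

definition setA :: "(complex^'n \<Rightarrow> complex^'n \<Rightarrow> complex^'n)
     \<Rightarrow> ((complex^'n) set \<times> (complex^'n \<Rightarrow> complex^'n) \<times> (complex^'n)) set" where
  "setA br = {(g, \<theta>, h). real_form br g \<and> semisimple br g \<and> euler_elem br g h \<and>
      cartan_involution br g \<theta> \<and> \<theta> h = - h \<and> extensional0 g \<theta>}"

definition setB :: "(complex^'n \<Rightarrow> complex^'n \<Rightarrow> complex^'n)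
     \<Rightarrow> ((complex^'n) set \<times> (complex^'n \<Rightarrow> complex^'n) \<times> (complex^'n)) set" where
  "setB br = {(g, \<tau>, z). real_form br g \<and> semisimple br g \<and> H_elem br g z \<and>
      lie_involution br g \<tau> \<and> \<tau> z = - z \<and> extensional0 g \<tau>}"

definition Phi :: "(complex^'n \<Rightarrow> complex^'n \<Rightarrow> complex^'n)
     \<Rightarrow> (complex^'n) set \<times> (complex^'n \<Rightarrow> complex^'n) \<times> (complex^'n)
     \<Rightarrow> (complex^'n) set \<times> (complex^'n \<Rightarrow> complex^'n) \<times> (complex^'n)" where
  "Phi br = (\<lambda>(g, \<theta>, h).
     let \<tau> = (\<lambda>v. if v \<in> g then tau_h br g h (\<theta> v) else 0);
         gc = {x + \<i> *s y | x y. x \<in> g \<and> \<tau> x = x \<and> y \<in> g \<and> \<tau> y = - y};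
         \<tau>c = (\<lambda>v. if v \<in> gc then (THE w. \<exists>x y. x \<in> g \<and> \<tau> x = x \<and> y \<in> g \<and> \<tau> y = - y \<and>
                      v = x + \<i> *s y \<and> w = x - \<i> *s y) else 0)
     in (gc, \<tau>c, \<i> *s h))"

end

(*
  For an Euler element h the involution tau_h is v - 2 [h, [h, v]], an involutive automorphism
  because ad h has eigenvalues in {-1, 0, 1}; as theta h = -h it commutes with theta, so
  tau = tau_h theta is an involution.  The inverse of Phi sends (g, tau, z) to
  (g^tau + i g^-tau, e^(pi ad z) sigma, -i z), sigma the conjugation of g_C with respect to g:
  the construction g |-> g^tau + i g^-tau is undone by repeating it with the conjugation, and
  e^(pi ad (i h)) = tau_h.  For x = a + i b and x' = a' + i b' in such a twisted form the
  Killing form satisfies B(x, x') = B(a, a') - B(b, b'), which carries the definiteness of one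
  Cartan involution to the other.  Semisimplicity and perfectness pass between real forms of
  the same complex Lie algebra, and perfectness turns the Cartan involution of [g, g] in the
  definition of an H-element into one of g.
*)
theory Submission
  imports Defs
begin

lemma scaleR_eq_of_real_smult: "(r::real) *\<^sub>R (v::complex^'n) = complex_of_real r *s v"
  unfolding vec_eq_iff by (simp add: scaleR_conv_of_real[where 'a=complex])

lemma smult_i_i [simp]: "\<i> *s (\<i> *s (v::complex^'n)) = - v"
  by (simp add: vec_eq_iff)

lemma smult_scaleR_commute [simp]: "(c::complex) *s (r *\<^sub>R v) = r *\<^sub>R (c *s (v::complex^'n))"
  by (simp add: vec_eq_iff)

lemmas smult_distribs [simp] =
  vector_add_ldistrib vector_ssub_ldistrib vector_smult_rneg vector_smult_assoc

lemma smult_sum: "(c::complex) *s (\<Sum>x\<in>A. f x) = (\<Sum>x\<in>A. c *s (f x::complex^'n))"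
  by (induct A rule: infinite_finite_induct) simp_all

lemma vec_double_eq_0_iff [simp]: "2 * (v::complex^'n) = 0 \<longleftrightarrow> v = 0"
  by (simp add: vec_eq_iff)

lemma linear_smult_i: "linear (\<lambda>x::complex^'n. \<i> *s x)"
  by (rule linearI) simp_all

lemma inj_smult_i: "inj (\<lambda>x::complex^'n. \<i> *s x)"
  by (rule injI) (metis smult_i_i minus_equation_iff)

lemmas scaleR_complex = scaleR_conv_of_real[where 'a=complex]

section \<open>Real forms\<close>

definition rf_re :: "(complex^'n) set \<Rightarrow> complex^'n \<Rightarrow> complex^'n" where
  "rf_re S v = fst (THE p. fst p \<in> S \<and> snd p \<in> S \<and> v = fst p + \<i> *s snd p)"

definition rf_im :: "(complex^'n) set \<Rightarrow> complex^'n \<Rightarrow> complex^'n" where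
  "rf_im S v = snd (THE p. fst p \<in> S \<and> snd p \<in> S \<and> v = fst p + \<i> *s snd p)"

definition rf_conj :: "(complex^'n) set \<Rightarrow> complex^'n \<Rightarrow> complex^'n" where
  "rf_conj S v = rf_re S v - \<i> *s rf_im S v"

lemma real_formI:
  assumes "subspace T" and "\<And>x y. x \<in> T \<Longrightarrow> y \<in> T \<Longrightarrow> br x y \<in> T"
    and span: "\<And>v. \<exists>x\<in>T. \<exists>y\<in>T. v = x + \<i> *s y"
    and inter: "\<And>x. x \<in> T \<Longrightarrow> \<i> *s x \<in> T \<Longrightarrow> x = 0"
  shows "real_form br T"
proof -
  have "p = q" if "fst p \<in> T" "snd p \<in> T" "fst q \<in> T" "snd q \<in> T"
    and "fst p + \<i> *s snd p = fst q + \<i> *s snd q" for p q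
  proof -
    have "fst p - fst q = \<i> *s (snd q - snd p)"
      using that(5) by (simp add: algebra_simps)
    then have "\<i> *s (fst p - fst q) = snd p - snd q"
      by simp
    then have "fst p - fst q = 0"
      using inter[of "fst p - fst q"] that(1-4) subspace_diff[OF assms(1)] by simp
    with \<open>fst p - fst q = \<i> *s (snd q - snd p)\<close> have "snd q - snd p = 0"
      by simp
    with \<open>fst p - fst q = 0\<close> show ?thesis
      by (simp add: prod_eq_iff)
  qed
  then have "\<exists>!p. fst p \<in> T \<and> snd p \<in> T \<and> v = fst p + \<i> *s snd p" for v
    using span[of v] by (metis fst_conv snd_conv)
  with assms(1,2) show ?thesis
    unfolding real_form_def by blast
qed

context
  fixes br :: "complex^'n \<Rightarrow> complex^'n \<Rightarrow> complex^'n" and S :: "(complex^'n) set"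
  assumes rf: "real_form br S"
begin

lemma real_form_subspace: "subspace S"
  using rf by (simp add: real_form_def)

lemma real_form_bracket: "x \<in> S \<Longrightarrow> y \<in> S \<Longrightarrow> br x y \<in> S"
  using rf by (simp add: real_form_def)

lemma rf_parts:
  shows rf_re_mem: "rf_re S v \<in> S" and rf_im_mem: "rf_im S v \<in> S"
    and rf_decomp: "v = rf_re S v + \<i> *s rf_im S v"
  using theI'[of "\<lambda>p. fst p \<in> S \<and> snd p \<in> S \<and> v = fst p + \<i> *s snd p"] rf
  by (simp_all add: real_form_def rf_re_def rf_im_def)

lemma rf_parts_unique:
  assumes "x \<in> S" "y \<in> S" "v = x + \<i> *s y"
  shows "rf_re S v = x" "rf_im S v = y"
proof -
  have "(THE p. fst p \<in> S \<and> snd p \<in> S \<and> v = fst p + \<i> *s snd p) = (x, y)"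
    by (rule the1_equality) (use rf assms in \<open>simp_all add: real_form_def\<close>)
  then show "rf_re S v = x" "rf_im S v = y"
    by (simp_all add: rf_re_def rf_im_def)
qed

lemma rf_parts_real [simp]: "x \<in> S \<Longrightarrow> rf_re S x = x" "x \<in> S \<Longrightarrow> rf_im S x = 0"
  using rf_parts_unique[of x 0 x] subspace_0[OF real_form_subspace] by auto

lemma rf_parts_imag [simp]:
  "x \<in> S \<Longrightarrow> rf_re S (\<i> *s x) = 0" "x \<in> S \<Longrightarrow> rf_im S (\<i> *s x) = x"
  using rf_parts_unique[of 0 x "\<i> *s x"] subspace_0[OF real_form_subspace] by auto

lemma rf_parts_add:
  "rf_re S (u + v) = rf_re S u + rf_re S v" "rf_im S (u + v) = rf_im S u + rf_im S v"
proof -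
  have e: "u + v = (rf_re S u + rf_re S v) + \<i> *s (rf_im S u + rf_im S v)"
    using rf_decomp[of u] rf_decomp[of v] by (simp add: algebra_simps)
  show "rf_re S (u + v) = rf_re S u + rf_re S v" "rf_im S (u + v) = rf_im S u + rf_im S v"
    using rf_parts_unique[OF _ _ e] rf_parts subspace_add[OF real_form_subspace] by auto
qed

lemma rf_parts_scaleR:
  "rf_re S (r *\<^sub>R v) = r *\<^sub>R rf_re S v" "rf_im S (r *\<^sub>R v) = r *\<^sub>R rf_im S v"
proof -
  have e: "r *\<^sub>R v = r *\<^sub>R rf_re S v + \<i> *s (r *\<^sub>R rf_im S v)"
    using rf_decomp[of v] by (metis scaleR_right_distrib smult_scaleR_commute)
  show "rf_re S (r *\<^sub>R v) = r *\<^sub>R rf_re S v" "rf_im S (r *\<^sub>R v) = r *\<^sub>R rf_im S v"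
    using rf_parts_unique[OF _ _ e] rf_parts subspace_scale[OF real_form_subspace] by auto
qed

lemma rf_parts_smult_i [simp]:
  "rf_re S (\<i> *s v) = - rf_im S v" "rf_im S (\<i> *s v) = rf_re S v"
proof -
  have e: "\<i> *s v = - rf_im S v + \<i> *s rf_re S v"
    using rf_decomp[of v] by (metis add.commute smult_i_i smult_distribs(1))
  show "rf_re S (\<i> *s v) = - rf_im S v" "rf_im S (\<i> *s v) = rf_re S v"
    using rf_parts_unique[OF _ _ e] rf_parts subspace_neg[OF real_form_subspace] by auto
qed

lemma rf_parts_neg [simp]: "rf_re S (- v) = - rf_re S v" "rf_im S (- v) = - rf_im S v"
  using rf_parts_scaleR[of "-1" v] by simp_all

lemma rf_parts_eqI: "rf_re S u = rf_re S v \<Longrightarrow> rf_im S u = rf_im S v \<Longrightarrow> u = v"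
  by (metis rf_decomp)

lemma real_form_imag_zero: "x \<in> S \<Longrightarrow> \<i> *s x \<in> S \<Longrightarrow> x = 0"
  using rf_parts_real(2)[of "\<i> *s x"] rf_parts_imag(2)[of x] by simp

lemma rf_conj_real [simp]: "x \<in> S \<Longrightarrow> rf_conj S x = x"
  by (simp add: rf_conj_def)

lemma rf_conj_imag [simp]: "x \<in> S \<Longrightarrow> rf_conj S (\<i> *s x) = - (\<i> *s x)"
  by (simp add: rf_conj_def)

lemma rf_parts_conj [simp]:
  "rf_re S (rf_conj S v) = rf_re S v" "rf_im S (rf_conj S v) = - rf_im S v"
  using rf_parts_unique[of "rf_re S v" "- rf_im S v" "rf_conj S v"] rf_parts
    subspace_neg[OF real_form_subspace]
  by (auto simp: rf_conj_def)

lemma rf_conj_conj [simp]: "rf_conj S (rf_conj S v) = v"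
  by (rule rf_parts_eqI) simp_all

lemma rf_conj_add: "rf_conj S (u + v) = rf_conj S u + rf_conj S v"
  by (simp add: rf_conj_def rf_parts_add algebra_simps)

lemma rf_conj_scaleR: "rf_conj S (r *\<^sub>R v) = r *\<^sub>R rf_conj S v"
  by (simp add: rf_conj_def rf_parts_scaleR algebra_simps)

lemma rf_conj_neg: "rf_conj S (- v) = - rf_conj S v"
  by (simp add: rf_conj_def)

lemma rf_conj_diff: "rf_conj S (u - v) = rf_conj S u - rf_conj S v"
  using rf_conj_add[of u "- v"] by (simp add: rf_conj_neg)

lemma linear_rf_conj: "linear (rf_conj S)"
  by (rule linearI) (simp_all add: rf_conj_add rf_conj_scaleR)

lemma rf_conj_smult_i: "rf_conj S (\<i> *s v) = - (\<i> *s rf_conj S v)"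
  by (simp add: rf_conj_def algebra_simps)

lemma rf_conj_add_self: "v + rf_conj S v = 2 *\<^sub>R rf_re S v"
  using rf_decomp[of v] by (simp add: rf_conj_def scaleR_2 algebra_simps)

end

locale complex_lie_algebra =
  fixes br :: "complex^'n \<Rightarrow> complex^'n \<Rightarrow> complex^'n"
  assumes lie: "complex_lie br"
begin

lemma bracket_add_left [simp]: "br (x + y) z = br x z + br y z"
  and bracket_add_right [simp]: "br x (y + z) = br x y + br x z"
  and bracket_smult_left [simp]: "br (c *s x) y = c *s br x y"
  and bracket_smult_right [simp]: "br x (c *s y) = c *s br x y"
  and bracket_self [simp]: "br x x = 0"
  and jacobi: "br x (br y z) + br y (br z x) + br z (br x y) = 0"
  using lie by (simp_all add: complex_lie_def)

lemma bracket_zero_left [simp]: "br 0 y = 0"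
  using bracket_add_left[of 0 0 y] by simp

lemma bracket_zero_right [simp]: "br y 0 = 0"
  using bracket_add_right[of y 0 0] by simp

lemma bracket_neg_left [simp]: "br (- x) y = - br x y"
  using bracket_add_left[of x "- x" y] by (simp add: eq_neg_iff_add_eq_0 add.commute)

lemma bracket_neg_right [simp]: "br y (- x) = - br y x"
  using bracket_add_right[of y x "- x"] by (simp add: eq_neg_iff_add_eq_0 add.commute)

lemma bracket_diff_left [simp]: "br (x - z) y = br x y - br z y"
  using bracket_add_left[of x "- z" y] by simp

lemma bracket_diff_right [simp]: "br y (x - z) = br y x - br y z"
  using bracket_add_right[of y x "- z"] by simp

lemma bracket_scaleR_left [simp]: "br (r *\<^sub>R x) y = r *\<^sub>R br x y"
  by (simp add: scaleR_eq_of_real_smult)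

lemma bracket_scaleR_right [simp]: "br y (r *\<^sub>R x) = r *\<^sub>R br y x"
  by (simp add: scaleR_eq_of_real_smult)

lemma bracket_anticomm: "br y x = - br x y"
proof -
  have "br x y + br y x = br (x + y) (x + y)"
    by (simp only: bracket_add_left bracket_add_right bracket_self[of x] bracket_self[of y]
        add_0_left add_0_right add.commute)
  then show ?thesis
    by (metis add.commute bracket_self eq_neg_iff_add_eq_0)
qed

lemma bracket_leibniz: "br x (br y z) = br (br x y) z + br y (br x z)"
  using jacobi[of x y z] bracket_anticomm[of z x] bracket_anticomm[of z "br x y"]
  by (simp add: algebra_simps)

lemma linear_bracket: "linear (br x)"
  by (rule linearI) simp_all

lemma linear_bracket2: "linear (\<lambda>v. br x (br y v))"
  using linear_compose[OF linear_bracket linear_bracket] by (simp add: o_def)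

lemma funpow_bracket_add: "(br z ^^ k) (x + y) = (br z ^^ k) x + (br z ^^ k) y"
  by (induct k) simp_all

lemma bracket_complex_parts:
  "br (a + \<i> *s b) (c + \<i> *s d) = (br a c - br b d) + \<i> *s (br a d + br b c)"
  by (simp add: algebra_simps)

lemma rf_parts_bracket:
  assumes rf: "real_form br S"
  shows "rf_re S (br u v) = br (rf_re S u) (rf_re S v) - br (rf_im S u) (rf_im S v)"
    and "rf_im S (br u v) = br (rf_re S u) (rf_im S v) + br (rf_im S u) (rf_re S v)"
proof -
  define a b c d where "a = rf_re S u" "b = rf_im S u" "c = rf_re S v" "d = rf_im S v"
  have S: "a \<in> S" "b \<in> S" "c \<in> S" "d \<in> S"
    using rf_parts[OF rf] a_b_c_d_def by auto
  have "br u v = br (a + \<i> *s b) (c + \<i> *s d)"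
    using rf_decomp[OF rf] a_b_c_d_def by metis
  also have "\<dots> = (br a c - br b d) + \<i> *s (br a d + br b c)"
    by (rule bracket_complex_parts)
  finally have e: "br u v = (br a c - br b d) + \<i> *s (br a d + br b c)" .
  have "br a c - br b d \<in> S" "br a d + br b c \<in> S"
    using S real_form_bracket[OF rf] subspace_diff[OF real_form_subspace[OF rf]]
      subspace_add[OF real_form_subspace[OF rf]] by auto
  from rf_parts_unique[OF rf this e] show
    "rf_re S (br u v) = br (rf_re S u) (rf_re S v) - br (rf_im S u) (rf_im S v)"
    "rf_im S (br u v) = br (rf_re S u) (rf_im S v) + br (rf_im S u) (rf_re S v)"
    by (simp_all add: a_b_c_d_def)
qed

lemma rf_conj_bracket:
  assumes rf: "real_form br S"
  shows "rf_conj S (br u v) = br (rf_conj S u) (rf_conj S v)"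
  by (rule rf_parts_eqI[OF rf]) (simp_all add: rf_parts_bracket[OF rf] rf_parts_conj[OF rf])

end

context
  fixes br :: "complex^'n \<Rightarrow> complex^'n \<Rightarrow> complex^'n" and S and f
  assumes inv: "lie_involution br S f"
begin

lemma lie_involution_mem: "x \<in> S \<Longrightarrow> f x \<in> S"
  and lie_involution_add: "x \<in> S \<Longrightarrow> y \<in> S \<Longrightarrow> f (x + y) = f x + f y"
  and lie_involution_scaleR: "x \<in> S \<Longrightarrow> f (r *\<^sub>R x) = r *\<^sub>R f x"
  and lie_involution_bracket: "x \<in> S \<Longrightarrow> y \<in> S \<Longrightarrow> f (br x y) = br (f x) (f y)"
  and lie_involution_involutive: "x \<in> S \<Longrightarrow> f (f x) = x"
  using inv by (simp_all add: lie_involution_def)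

lemma lie_involution_neg: "x \<in> S \<Longrightarrow> f (- x) = - f x"
  using lie_involution_scaleR[of x "-1"] by simp

lemma lie_involution_diff: "subspace S \<Longrightarrow> x \<in> S \<Longrightarrow> y \<in> S \<Longrightarrow> f (x - y) = f x - f y"
  using lie_involution_add[of x "- y"] lie_involution_neg[of y] subspace_neg by fastforce

lemma lie_involution_zero: "subspace S \<Longrightarrow> f 0 = 0"
  using lie_involution_scaleR[of 0 0] subspace_0 by fastforce

end

lemma lie_involution_cong:
  assumes "lie_involution br S f" and "\<And>v. v \<in> S \<Longrightarrow> f' v = f v" and "subspace S"
    and "\<And>x y. x \<in> S \<Longrightarrow> y \<in> S \<Longrightarrow> br x y \<in> S"
  shows "lie_involution br S f'"
  using assms subspace_add[OF assms(3)] subspace_scale[OF assms(3)]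
  unfolding lie_involution_def by simp

lemma lie_involution_comp:
  assumes f: "lie_involution br S f" and g: "lie_involution br S g"
    and comm: "\<And>x. x \<in> S \<Longrightarrow> f (g x) = g (f x)"
  shows "lie_involution br S (\<lambda>x. f (g x))"
  unfolding lie_involution_def
  using f g comm lie_involution_mem[OF f] lie_involution_mem[OF g] lie_involution_add[OF f]
    lie_involution_add[OF g] lie_involution_scaleR[OF f] lie_involution_scaleR[OF g]
    lie_involution_bracket[OF f] lie_involution_bracket[OF g]
    lie_involution_involutive[OF f] lie_involution_involutive[OF g]
  by (simp add: lie_involution_def)

section \<open>The twisted real form \<open>g\<^sup>\<tau> + i g\<^sup>-\<^sup>\<tau>\<close>\<close>

definition twisted_form :: "(complex^'n) set \<Rightarrow> (complex^'n \<Rightarrow> complex^'n) \<Rightarrow> (complex^'n) set" where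
  "twisted_form S \<tau> = {x + \<i> *s y | x y. x \<in> S \<and> \<tau> x = x \<and> y \<in> S \<and> \<tau> y = - y}"

lemma twisted_form_cong:
  assumes "\<And>v. v \<in> S \<Longrightarrow> f v = f' v"
  shows "twisted_form S f = twisted_form S f'"
  unfolding twisted_form_def using assms by metis

context complex_lie_algebra
begin

context
  fixes S :: "(complex^'n) set" and \<tau> :: "complex^'n \<Rightarrow> complex^'n"
  assumes rf: "real_form br S" and inv: "lie_involution br S \<tau>"
begin

private lemmas S_closed = subspace_add[OF real_form_subspace[OF rf]]
  subspace_diff[OF real_form_subspace[OF rf]] subspace_neg[OF real_form_subspace[OF rf]]
  subspace_scale[OF real_form_subspace[OF rf]] subspace_0[OF real_form_subspace[OF rf]]
  real_form_bracket[OF rf] lie_involution_mem[OF inv] rf_re_mem[OF rf] rf_im_mem[OF rf]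

private lemmas \<tau>_simps = lie_involution_add[OF inv]
  lie_involution_diff[OF inv real_form_subspace[OF rf]]
  lie_involution_neg[OF inv] lie_involution_scaleR[OF inv] lie_involution_bracket[OF inv]
  lie_involution_involutive[OF inv] lie_involution_zero[OF inv real_form_subspace[OF rf]]

lemma mem_twisted_form_iff:
  "v \<in> twisted_form S \<tau> \<longleftrightarrow> \<tau> (rf_re S v) = rf_re S v \<and> \<tau> (rf_im S v) = - rf_im S v"
proof
  assume "v \<in> twisted_form S \<tau>"
  then obtain x y where "x \<in> S" "\<tau> x = x" "y \<in> S" "\<tau> y = - y" "v = x + \<i> *s y"
    by (auto simp: twisted_form_def)
  then show "\<tau> (rf_re S v) = rf_re S v \<and> \<tau> (rf_im S v) = - rf_im S v"
    using rf_parts_unique[OF rf] by auto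
next
  assume "\<tau> (rf_re S v) = rf_re S v \<and> \<tau> (rf_im S v) = - rf_im S v"
  then show "v \<in> twisted_form S \<tau>"
    unfolding twisted_form_def using rf_parts[OF rf, of v] by blast
qed

lemma twisted_formI: "x \<in> S \<Longrightarrow> \<tau> x = x \<Longrightarrow> y \<in> S \<Longrightarrow> \<tau> y = - y \<Longrightarrow> x + \<i> *s y \<in> twisted_form S \<tau>"
  unfolding twisted_form_def by blast

lemma fixed_in_twisted_form: "x \<in> S \<Longrightarrow> \<tau> x = x \<Longrightarrow> x \<in> twisted_form S \<tau>"
  unfolding mem_twisted_form_iff using rf by (simp add: \<tau>_simps)

lemma anti_fixed_in_twisted_form: "y \<in> S \<Longrightarrow> \<tau> y = - y \<Longrightarrow> \<i> *s y \<in> twisted_form S \<tau>"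
  unfolding mem_twisted_form_iff using rf by (simp add: \<tau>_simps)

lemma real_form_twisted_form: "real_form br (twisted_form S \<tau>)"
proof (rule real_formI)
  show "subspace (twisted_form S \<tau>)"
    unfolding subspace_def
  proof (intro conjI ballI allI)
    show "0 \<in> twisted_form S \<tau>"
      using twisted_formI[of 0 0] by (simp add: \<tau>_simps S_closed)
    show "x + y \<in> twisted_form S \<tau>" if "x \<in> twisted_form S \<tau>" "y \<in> twisted_form S \<tau>" for x y
      using that unfolding mem_twisted_form_iff by (simp add: rf_parts_add[OF rf] \<tau>_simps S_closed)
    show "c *\<^sub>R x \<in> twisted_form S \<tau>" if "x \<in> twisted_form S \<tau>" for c x
      using that unfolding mem_twisted_form_iff
      by (simp add: rf_parts_scaleR[OF rf] \<tau>_simps S_closed)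
  qed
  show "br x y \<in> twisted_form S \<tau>" if "x \<in> twisted_form S \<tau>" "y \<in> twisted_form S \<tau>" for x y
    using that unfolding mem_twisted_form_iff
    by (simp add: rf_parts_bracket[OF rf] \<tau>_simps S_closed)
  show "x = 0" if "x \<in> twisted_form S \<tau>" "\<i> *s x \<in> twisted_form S \<tau>" for x
  proof -
    have "\<tau> (rf_re S x) = - rf_re S x" "\<tau> (rf_im S x) = rf_im S x"
      using that(2) by (simp_all add: mem_twisted_form_iff rf_parts_smult_i[OF rf] \<tau>_simps S_closed)
    with that(1) have "rf_re S x = 0" "rf_im S x = 0"
      by (simp_all add: mem_twisted_form_iff)
    then show ?thesis
      using rf_decomp[OF rf, of x] by simp
  qed
  show "\<exists>x\<in>twisted_form S \<tau>. \<exists>y\<in>twisted_form S \<tau>. v = x + \<i> *s y" for v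
  proof -
    define p q where "p = rf_re S v" "q = rf_im S v"
    have pq: "p \<in> S" "q \<in> S"
      using rf_parts[OF rf] p_q_def by auto
    define x where "x = (1/2) *\<^sub>R (p + \<tau> p) + \<i> *s ((1/2) *\<^sub>R (q - \<tau> q))"
    define y where "y = (1/2) *\<^sub>R (q + \<tau> q) + \<i> *s (- ((1/2) *\<^sub>R (p - \<tau> p)))"
    have "x \<in> twisted_form S \<tau>" "y \<in> twisted_form S \<tau>"
      unfolding x_def y_def
      by (rule twisted_formI; use pq in \<open>simp add: \<tau>_simps S_closed algebra_simps\<close>)+
    moreover have "v = x + \<i> *s y"
      using rf_decomp[OF rf, of v] unfolding x_def y_def p_q_def
      by (simp add: vec_eq_iff scaleR_complex field_simps)
    ultimately show ?thesis
      by blast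
  qed
qed

lemma rf_conj_mem_twisted_form: "v \<in> twisted_form S \<tau> \<Longrightarrow> rf_conj S v \<in> twisted_form S \<tau>"
  unfolding mem_twisted_form_iff by (simp add: rf_parts_conj[OF rf] \<tau>_simps S_closed)

lemma lie_involution_rf_conj_twisted_form: "lie_involution br (twisted_form S \<tau>) (rf_conj S)"
  unfolding lie_involution_def
  by (simp add: rf_conj_mem_twisted_form rf_conj_add[OF rf] rf_conj_scaleR[OF rf]
      rf_conj_bracket[OF rf] rf_conj_conj[OF rf])

lemma fixed_anti_fixed_decomp:
  assumes "s \<in> S"
  obtains a b where "a \<in> S" "\<tau> a = a" "b \<in> S" "\<tau> b = - b" "s = a + b" "\<tau> s = a - b"
proof
  let ?a = "(1/2) *\<^sub>R (s + \<tau> s)" and ?b = "(1/2) *\<^sub>R (s - \<tau> s)"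
  show "?a \<in> S" "\<tau> ?a = ?a" "?b \<in> S" "\<tau> ?b = - ?b"
    using assms by (simp_all add: \<tau>_simps S_closed algebra_simps)
  show "s = ?a + ?b" "\<tau> s = ?a - ?b"
    by (simp_all add: vec_eq_iff scaleR_complex field_simps)
qed

lemma twisted_form_twisted_form: "twisted_form (twisted_form S \<tau>) (rf_conj S) = S"
proof
  show "twisted_form (twisted_form S \<tau>) (rf_conj S) \<subseteq> S"
  proof
    fix v assume "v \<in> twisted_form (twisted_form S \<tau>) (rf_conj S)"
    then obtain x y where xy: "rf_conj S x = x" "rf_conj S y = - y" "v = x + \<i> *s y"
      unfolding twisted_form_def by blast
    have "rf_im S x = 0" "rf_re S y = 0"
      using arg_cong[OF xy(1), of "rf_im S"] arg_cong[OF xy(2), of "rf_re S"]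
      by (simp_all add: rf_parts_conj[OF rf] rf_parts_neg[OF rf])
    then have "v = rf_re S x - rf_im S y"
      using xy(3) rf_decomp[OF rf, of x] rf_decomp[OF rf, of y] by (metis add_0 add_0_right
          diff_conv_add_uminus smult_distribs(1) smult_i_i vector_smult_rzero)
    then show "v \<in> S"
      by (simp add: S_closed)
  qed
  show "S \<subseteq> twisted_form (twisted_form S \<tau>) (rf_conj S)"
  proof
    fix s assume "s \<in> S"
    then obtain a b where ab: "a \<in> S" "\<tau> a = a" "b \<in> S" "\<tau> b = - b" "s = a + b"
      by (rule fixed_anti_fixed_decomp)
    have "s = a + \<i> *s (\<i> *s (- b))"
      using ab(5) by simp
    moreover have "a \<in> twisted_form S \<tau>" "\<i> *s (- b) \<in> twisted_form S \<tau>"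
      using fixed_in_twisted_form anti_fixed_in_twisted_form[of "- b"] ab
      by (simp_all add: \<tau>_simps S_closed)
    moreover have "rf_conj S a = a" "rf_conj S (\<i> *s (- b)) = - (\<i> *s (- b))"
      using ab
      by (simp_all add: rf_conj_real[OF rf] rf_conj_imag[OF rf] rf_conj_neg[OF rf] S_closed)
    ultimately show "s \<in> twisted_form (twisted_form S \<tau>) (rf_conj S)"
      unfolding twisted_form_def by blast
  qed
qed

lemma rf_conj_twisted_form:
  assumes "s \<in> S"
  shows "rf_conj (twisted_form S \<tau>) s = \<tau> s"
proof -
  obtain a b where ab: "a \<in> S" "\<tau> a = a" "b \<in> S" "\<tau> b = - b" "s = a + b" "\<tau> s = a - b"
    using assms by (rule fixed_anti_fixed_decomp)
  have a: "a \<in> twisted_form S \<tau>" and b: "\<i> *s (- b) \<in> twisted_form S \<tau>"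
    using fixed_in_twisted_form anti_fixed_in_twisted_form[of "- b"] ab
    by (simp_all add: \<tau>_simps S_closed)
  have "s = a + \<i> *s (\<i> *s (- b))"
    using ab(5) by simp
  from rf_parts_unique[OF real_form_twisted_form a b this]
  have "rf_conj (twisted_form S \<tau>) s = a - \<i> *s (\<i> *s (- b))"
    unfolding rf_conj_def by simp
  with ab(6) show ?thesis
    by simp
qed

end

end

section \<open>Traces\<close>

definition trace_basis :: "(complex^'n) set \<Rightarrow> (complex^'n \<Rightarrow> complex^'n) \<Rightarrow> real" where
  "trace_basis B f = (\<Sum>b\<in>B. representation B (f b) b)"

lemma representation_sum_subset_basis:
  assumes B: "independent (B::(complex^'n) set)" and C: "C \<subseteq> B"
  shows "representation B (\<Sum>c\<in>C. a c *\<^sub>R c) x = (if x \<in> C then a x else 0)"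
proof -
  have fin: "finite C" using finiteI_independent[OF B] C finite_subset by blast
  have "representation B (\<Sum>c\<in>C. a c *\<^sub>R c) x = (\<Sum>c\<in>C. representation B (a c *\<^sub>R c) x)"
    by (subst representation_sum[OF B]) (use C in \<open>auto intro: span_scale span_base\<close>)
  also have "\<dots> = (\<Sum>c\<in>C. a c * (if x = c then 1 else 0))"
    by (rule sum.cong)
      (use C in \<open>auto simp: representation_scale[OF B] span_base representation_basis[OF B]\<close>)
  also have "\<dots> = (if x \<in> C then a x else 0)"
    using fin by (simp add: if_distrib[of "\<lambda>t. _ * t"] sum.delta cong: if_cong)
  finally show ?thesis .
qed

lemma representation_expansion:
  assumes B: "independent (B::(complex^'n) set)" and v: "v \<in> span B"
  shows "(\<Sum>b\<in>B. representation B v b *\<^sub>R b) = v"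
  by (rule sum_representation_eq[OF B v finiteI_independent[OF B] order_refl])

lemma representation_linear_image:
  assumes B: "independent (B::(complex^'n) set)" and v: "v \<in> span B" and f: "linear f"
    and fB: "\<And>b. b \<in> B \<Longrightarrow> f b \<in> span C" and C: "independent (C::(complex^'n) set)"
  shows "representation C (f v) x = (\<Sum>b\<in>B. representation B v b * representation C (f b) x)"
proof -
  have "f v = f (\<Sum>b\<in>B. representation B v b *\<^sub>R b)" using representation_expansion[OF B v] by simp
  also have "\<dots> = (\<Sum>b\<in>B. representation B v b *\<^sub>R f b)"
    by (simp add: linear_sum[OF f] linear_cmul[OF f])
  finally have e: "f v = (\<Sum>b\<in>B. representation B v b *\<^sub>R f b)" .
  show ?thesis unfolding e
    by (subst representation_sum[OF C])
      (auto intro: span_scale fB simp: representation_scale[OF C] fB)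
qed

lemma representation_change_basis:
  assumes B: "independent (B::(complex^'n) set)" and C: "independent C" and sp: "span B = span C"
    and v: "v \<in> span B"
  shows "representation C v c = (\<Sum>b\<in>B. representation B v b * representation C b c)"
  using representation_linear_image[OF B v linear_id _ C] sp span_base by (auto simp: id_def)

lemma trace_basis_indep:
  assumes B: "independent (B::(complex^'n) set)" and C: "independent C" and sp: "span B = span C"
    and f: "linear f" and fS: "\<And>v. v \<in> span B \<Longrightarrow> f v \<in> span B"
  shows "trace_basis B f = trace_basis C f"
proof -
  let ?R = "representation B" and ?Q = "representation C"
  have fB: "b \<in> B \<Longrightarrow> f b \<in> span B" for b
    using fS span_base by blast
  have "trace_basis C f = (\<Sum>c\<in>C. \<Sum>b\<in>B. ?R c b * ?Q (f b) c)"
    unfolding trace_basis_def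
    by (intro sum.cong refl representation_linear_image[OF B _ f _ C]) (use sp fB span_base in auto)
  also have "\<dots> = (\<Sum>c\<in>C. \<Sum>b\<in>B. \<Sum>b'\<in>B. ?R c b * ?R (f b) b' * ?Q b' c)"
    using representation_change_basis[OF B C sp fB]
    by (simp add: sum_distrib_left mult.assoc)
  also have "\<dots> = (\<Sum>b\<in>B. \<Sum>b'\<in>B. \<Sum>c\<in>C. ?R c b * ?R (f b) b' * ?Q b' c)"
    by (subst sum.swap) (intro sum.cong refl sum.swap)
  also have "\<dots> = (\<Sum>b\<in>B. \<Sum>b'\<in>B. ?R (f b) b' * (\<Sum>c\<in>C. ?Q b' c * ?R c b))"
    by (simp add: sum_distrib_left mult_ac)
  also have "\<dots> = (\<Sum>b\<in>B. \<Sum>b'\<in>B. ?R (f b) b' * ?R b' b)"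
  proof (intro sum.cong refl)
    fix b b' assume "b' \<in> B"
    then have "b' \<in> span C"
      using sp span_base by blast
    then show "?R (f b) b' * (\<Sum>c\<in>C. ?Q b' c * ?R c b) = ?R (f b) b' * ?R b' b"
      using representation_change_basis[OF C B sp[symmetric]] by simp
  qed
  also have "\<dots> = trace_basis B f"
    unfolding trace_basis_def using finiteI_independent[OF B]
    by (intro sum.cong refl)
      (simp add: representation_basis[OF B] if_distrib[of "(*) _"] sum.delta cong: if_cong)
  finally show ?thesis
    by simp
qed

lemma subspace_basisE:
  assumes "subspace (S::(complex^'n) set)"
  obtains B where "independent B" "span B = S"
proof -
  obtain B where B: "B \<subseteq> S" "independent B" "S \<subseteq> span B" by (rule basis_exists[of S])
  have "span B \<subseteq> S" by (rule span_minimal[OF B(1) assms])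
  with B(3) have "span B = S" by blast
  from that[OF B(2) this] show ?thesis .
qed

lemma trace_on_eq_trace_basis:
  assumes B: "independent (B::(complex^'n) set)" and S: "span B = S" and f: "linear f"
    and fS: "\<And>v. v \<in> S \<Longrightarrow> f v \<in> S"
  shows "trace_on S f = trace_basis B f"
proof -
  let ?B = "SOME B. independent B \<and> span B = S"
  have B': "independent ?B \<and> span ?B = S" by (rule someI_ex) (use B S in blast)
  have "trace_on S f = trace_basis ?B f" by (simp add: trace_on_def trace_basis_def Let_def)
  also have "\<dots> = trace_basis B f"
  proof (rule trace_basis_indep)
    show "independent ?B" "independent B" "linear f" using B' B f by simp_all
    show "span ?B = span B" using B' S by simp
    show "f v \<in> span ?B" if "v \<in> span ?B" for v using that B' fS by simp
  qed
  finally show ?thesis .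
qed

lemma trace_basis_add:
  assumes B: "independent (B::(complex^'n) set)"
    and "\<And>b. b \<in> B \<Longrightarrow> f b \<in> span B" "\<And>b. b \<in> B \<Longrightarrow> g b \<in> span B"
  shows "trace_basis B (\<lambda>v. f v + g v) = trace_basis B f + trace_basis B g"
  unfolding trace_basis_def by (simp add: representation_add[OF B] assms sum.distrib)

lemma trace_basis_scale:
  assumes B: "independent (B::(complex^'n) set)" and "\<And>b. b \<in> B \<Longrightarrow> f b \<in> span B"
  shows "trace_basis B (\<lambda>v. r *\<^sub>R f v) = r * trace_basis B f"
  unfolding trace_basis_def by (simp add: representation_scale[OF B] assms sum_distrib_left)

lemma trace_basis_comm:
  assumes B: "independent (B::(complex^'n) set)" and f: "linear f" and g: "linear g"
    and fB: "\<And>v. v \<in> span B \<Longrightarrow> f v \<in> span B" and gB: "\<And>v. v \<in> span B \<Longrightarrow> g v \<in> span B"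
  shows "trace_basis B (\<lambda>v. f (g v)) = trace_basis B (\<lambda>v. g (f v))"
proof -
  let ?R = "representation B"
  have 1: "?R (f (g b)) b = (\<Sum>c\<in>B. ?R (g b) c * ?R (f c) b)" if "b \<in> B" for b
    by (rule representation_linear_image[OF B gB[OF span_base[OF that]] f fB[OF span_base] B])
  have 2: "?R (g (f b)) b = (\<Sum>c\<in>B. ?R (f b) c * ?R (g c) b)" if "b \<in> B" for b
    by (rule representation_linear_image[OF B fB[OF span_base[OF that]] g gB[OF span_base] B])
  have "trace_basis B (\<lambda>v. f (g v)) = (\<Sum>b\<in>B. \<Sum>c\<in>B. ?R (g b) c * ?R (f c) b)"
    unfolding trace_basis_def by (rule sum.cong) (simp_all add: 1)
  also have "\<dots> = (\<Sum>c\<in>B. \<Sum>b\<in>B. ?R (g b) c * ?R (f c) b)" by (rule sum.swap)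
  also have "\<dots> = trace_basis B (\<lambda>v. g (f v))"
    unfolding trace_basis_def by (rule sum.cong) (simp_all add: 2 mult.commute)
  finally show ?thesis .
qed

context
  fixes S :: "(complex^'n) set"
  assumes S: "subspace S"
begin

lemma trace_on_add:
  assumes "linear f" "linear g" "\<And>v. v \<in> S \<Longrightarrow> f v \<in> S" "\<And>v. v \<in> S \<Longrightarrow> g v \<in> S"
  shows "trace_on S (\<lambda>v. f v + g v) = trace_on S f + trace_on S g"
proof -
  obtain B where B: "independent B" "span B = S" using subspace_basisE[OF S] by blast
  have l: "linear (\<lambda>v. f v + g v)" using assms(1,2) by (rule linear_compose_add)
  show ?thesis
    using trace_on_eq_trace_basis[OF B l] trace_on_eq_trace_basis[OF B assms(1)]
      trace_on_eq_trace_basis[OF B assms(2)]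
      trace_basis_add[OF B(1), of f g] assms(3,4) B(2) span_base subspace_add[OF S]
    by (metis (no_types, lifting))
qed

lemma trace_on_scale:
  assumes "linear f" "\<And>v. v \<in> S \<Longrightarrow> f v \<in> S"
  shows "trace_on S (\<lambda>v. r *\<^sub>R f v) = r * trace_on S f"
proof -
  obtain B where B: "independent B" "span B = S" using subspace_basisE[OF S] by blast
  have l: "linear (\<lambda>v. r *\<^sub>R f v)" using assms(1) by (rule linear_compose_scale_right)
  show ?thesis
    using trace_on_eq_trace_basis[OF B l] trace_on_eq_trace_basis[OF B assms(1)]
      trace_basis_scale[OF B(1), of f r] assms(2) B(2) span_base subspace_scale[OF S]
    by (metis (no_types, lifting))
qed

lemma trace_on_neg:
  assumes "linear f" "\<And>v. v \<in> S \<Longrightarrow> f v \<in> S"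
  shows "trace_on S (\<lambda>v. - f v) = - trace_on S f"
  using trace_on_scale[OF assms, of "-1"] by simp

lemma trace_on_diff:
  assumes "linear f" "linear g" "\<And>v. v \<in> S \<Longrightarrow> f v \<in> S" "\<And>v. v \<in> S \<Longrightarrow> g v \<in> S"
  shows "trace_on S (\<lambda>v. f v - g v) = trace_on S f - trace_on S g"
proof -
  have "linear (\<lambda>v. - g v)" using assms(2) by (rule linear_compose_neg)
  then have "trace_on S (\<lambda>v. f v + - g v) = trace_on S f + trace_on S (\<lambda>v. - g v)"
    using trace_on_add[OF assms(1) _ assms(3)] assms(4) subspace_neg[OF S] by blast
  then show ?thesis using trace_on_neg[OF assms(2,4)] by simp
qed

lemma trace_on_comm:
  assumes "linear f" "linear g" "\<And>v. v \<in> S \<Longrightarrow> f v \<in> S" "\<And>v. v \<in> S \<Longrightarrow> g v \<in> S"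
  shows "trace_on S (\<lambda>v. f (g v)) = trace_on S (\<lambda>v. g (f v))"
proof -
  obtain B where B: "independent B" "span B = S" using subspace_basisE[OF S] by blast
  have l1: "linear (\<lambda>v. f (g v))" using linear_compose[OF assms(2,1)] by (simp add: o_def)
  have l2: "linear (\<lambda>v. g (f v))" using linear_compose[OF assms(1,2)] by (simp add: o_def)
  show ?thesis
    using trace_on_eq_trace_basis[OF B l1] trace_on_eq_trace_basis[OF B l2]
      trace_basis_comm[OF B(1) assms(1,2)] assms(3,4) B(2)
    by auto
qed

lemma trace_on_zero: "trace_on S (\<lambda>v. 0) = 0"
  using trace_on_scale[of "\<lambda>v. 0" 0] subspace_0[OF S] linear_zero by simp

end

lemma representation_sum_image:
  assumes B: "independent (B::(complex^'n) set)" and C: "g ` C \<subseteq> B" and inj: "inj_on g C"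
  shows "representation B (\<Sum>c\<in>C. a c *\<^sub>R g c) y = (if y \<in> g ` C then a (inv_into C g y) else 0)"
proof -
  have "(\<Sum>c\<in>C. a c *\<^sub>R g c) = (\<Sum>d\<in>g ` C. a (inv_into C g d) *\<^sub>R d)"
    by (subst sum.reindex[OF inj]) (simp add: inv_into_f_f[OF inj])
  then show ?thesis using representation_sum_subset_basis[OF B C] by simp
qed

definition complexified_basis :: "(complex^'n) set \<Rightarrow> (complex^'n) set" where
  "complexified_basis B = B \<union> (\<lambda>x. \<i> *s x) ` B"

context
  fixes br :: "complex^'n \<Rightarrow> complex^'n \<Rightarrow> complex^'n" and S :: "(complex^'n) set"
    and B :: "(complex^'n) set"
  assumes rf: "real_form br S" and B: "independent B" "span B = S"
begin

lemma complexified_basis_disjoint: "B \<inter> (\<lambda>x. \<i> *s x) ` B = {}"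
proof (rule ccontr)
  assume "B \<inter> (\<lambda>x. \<i> *s x) ` B \<noteq> {}"
  then obtain c where c: "c \<in> B" "\<i> *s c \<in> B" by auto
  then have "c \<in> S" "\<i> *s c \<in> S" using B span_base by blast+
  then have "c = 0" by (rule real_form_imag_zero[OF rf])
  with c B(1) dependent_zero show False by blast
qed

lemma complexified_basis_finite: "finite B" "finite (complexified_basis B)"
  using finiteI_independent[OF B(1)] by (auto simp: complexified_basis_def)

lemma complexified_basis_sum:
  "(\<Sum>x\<in>complexified_basis B. h x) = (\<Sum>x\<in>B. h x) + (\<Sum>x\<in>B. h (\<i> *s x))"
  unfolding complexified_basis_def
  by (subst sum.union_disjoint)
    (use complexified_basis_finite complexified_basis_disjoint in
      \<open>auto simp: sum.reindex[OF inj_on_subset[OF inj_smult_i]]\<close>)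

lemma independent_complexified_basis: "independent (complexified_basis B)"
proof -
  have "\<forall>v\<in>complexified_basis B. c v = 0" if z: "(\<Sum>v\<in>complexified_basis B. c v *\<^sub>R v) = 0" for c
  proof -
    define x y where "x = (\<Sum>v\<in>B. c v *\<^sub>R v)" "y = (\<Sum>v\<in>B. c (\<i> *s v) *\<^sub>R v)"
    have "x \<in> span B" "y \<in> span B"
      unfolding x_y_def by (auto intro!: span_sum span_scale intro: span_base)
    then have xy: "x \<in> S" "y \<in> S"
      using B(2) by auto
    have "0 = x + \<i> *s y"
      using z unfolding complexified_basis_sum x_y_def by (simp add: smult_sum)
    then have "x = 0" "y = 0"
      using rf_parts_unique[OF rf xy] rf_parts_real[OF rf] subspace_0[OF real_form_subspace[OF rf]]
      by auto
    then have "\<forall>v\<in>B. c v = 0" "\<forall>v\<in>B. c (\<i> *s v) = 0"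
      using B(1) complexified_basis_finite(1) unfolding x_y_def independent_explicit by auto
    then show ?thesis
      unfolding complexified_basis_def by auto
  qed
  then show ?thesis
    unfolding independent_explicit using complexified_basis_finite by blast
qed

lemma span_complexified_basis: "span (complexified_basis B) = UNIV"
proof -
  have "v \<in> span (complexified_basis B)" for v
  proof -
    have "rf_re S v \<in> span B" "rf_im S v \<in> span B"
      using rf_parts[OF rf] B by auto
    then have "rf_re S v \<in> span B" "\<i> *s rf_im S v \<in> span ((\<lambda>x. \<i> *s x) ` B)"
      using span_linear_image[OF linear_smult_i] by auto
    then have "rf_re S v \<in> span (complexified_basis B)"
      and "\<i> *s rf_im S v \<in> span (complexified_basis B)"
      using span_mono[of B "complexified_basis B"]
        span_mono[of "(\<lambda>x. \<i> *s x) ` B" "complexified_basis B"]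
      by (auto simp: complexified_basis_def)
    then show ?thesis
      using span_add rf_decomp[OF rf, of v] by metis
  qed
  then show ?thesis
    by auto
qed

lemma representation_complexified_basis:
  assumes w: "w \<in> S" and x: "x \<in> B"
  shows "representation (complexified_basis B) w x = representation B w x"
    and "representation (complexified_basis B) w (\<i> *s x) = 0"
    and "representation (complexified_basis B) (\<i> *s w) x = 0"
    and "representation (complexified_basis B) (\<i> *s w) (\<i> *s x) = representation B w x"
proof -
  let ?C = "complexified_basis B"
  define a where "a = representation B w"
  have "w = (\<Sum>c\<in>B. a c *\<^sub>R id c)"
    using representation_expansion[OF B(1), of w] w B(2) unfolding a_def by simp
  moreover from this have "\<i> *s w = (\<Sum>c\<in>B. a c *\<^sub>R (\<i> *s c))"
    by (simp add: smult_sum)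
  moreover have "id ` B \<subseteq> ?C" "(\<lambda>c. \<i> *s c) ` B \<subseteq> ?C"
    by (auto simp: complexified_basis_def)
  moreover have "x \<notin> (\<lambda>c. \<i> *s c) ` B" "\<i> *s x \<notin> B"
    using complexified_basis_disjoint x by blast+
  ultimately show "representation ?C w x = a x" "representation ?C w (\<i> *s x) = 0"
    "representation ?C (\<i> *s w) x = 0" "representation ?C (\<i> *s w) (\<i> *s x) = a x"
    using representation_sum_image[OF independent_complexified_basis _ inj_on_id, of B a]
      representation_sum_image[OF independent_complexified_basis _ inj_on_subset[OF inj_smult_i],
        of B a]
      x inv_into_f_f[OF inj_on_subset[OF inj_smult_i], of B x]
    by simp_all
qed

lemma complexified_basis_trace_UNIV:
  assumes f: "linear f" and fi: "\<And>v. f (\<i> *s v) = \<i> *s f v" and fS: "\<And>v. v \<in> S \<Longrightarrow> f v \<in> S"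
  shows "trace_on UNIV f = 2 * trace_on S f"
    and "trace_on UNIV (\<lambda>v. \<i> *s f v) = 0"
proof -
  let ?C = "complexified_basis B"
  have fx: "f x \<in> S" if "x \<in> B" for x
    using fS span_base B that by blast
  have "trace_on UNIV f = trace_basis ?C f"
    by (rule trace_on_eq_trace_basis[OF independent_complexified_basis span_complexified_basis f])
      simp
  also have "\<dots> = (\<Sum>x\<in>B. representation ?C (f x) x) + (\<Sum>x\<in>B. representation ?C (\<i> *s f x) (\<i> *s x))"
    unfolding trace_basis_def complexified_basis_sum fi ..
  also have "\<dots> = 2 * trace_basis B f"
    unfolding trace_basis_def using representation_complexified_basis fx by simp
  also have "\<dots> = 2 * trace_on S f"
    using trace_on_eq_trace_basis[OF B f fS] by simp
  finally show "trace_on UNIV f = 2 * trace_on S f" .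
  have "linear (\<lambda>v. \<i> *s f v)"
    using linear_compose[OF f linear_smult_i] by (simp add: o_def)
  then have "trace_on UNIV (\<lambda>v. \<i> *s f v) = trace_basis ?C (\<lambda>v. \<i> *s f v)"
    by (rule trace_on_eq_trace_basis[OF independent_complexified_basis span_complexified_basis])
      simp
  also have "\<dots> = (\<Sum>x\<in>B. representation ?C (\<i> *s f x) x) - (\<Sum>x\<in>B. representation ?C (f x) (\<i> *s x))"
    unfolding trace_basis_def complexified_basis_sum fi
    using representation_neg[OF independent_complexified_basis] span_complexified_basis
    by (simp add: sum_negf)
  also have "\<dots> = 0"
    using representation_complexified_basis fx by simp
  finally show "trace_on UNIV (\<lambda>v. \<i> *s f v) = 0" .
qed

end

lemma trace_on_cong:
  assumes D: "subspace (D::(complex^'n) set)" and fg: "\<And>v. v \<in> D \<Longrightarrow> f v = g v"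
  shows "trace_on D f = trace_on D g"
proof -
  let ?B = "SOME B. independent B \<and> span B = D"
  obtain B0 where B0: "independent B0" "span B0 = D" by (rule subspace_basisE[OF D])
  have B: "independent ?B \<and> span ?B = D" by (rule someI_ex) (use B0 in blast)
  have "f b = g b" if b: "b \<in> ?B" for b
  proof -
    have "b \<in> span ?B" using span_base[OF b] .
    then have "b \<in> D" using B by simp
    then show ?thesis by (rule fg)
  qed
  then show ?thesis unfolding trace_on_def Let_def by (intro sum.cong refl) simp
qed

lemma trace_on_restrict:
  assumes D: "subspace D" and S: "subspace S" and DS: "D \<subseteq> S" and f: "linear f"
    and fSD: "\<And>v. v \<in> S \<Longrightarrow> f v \<in> D"
  shows "trace_on S f = trace_on (D::(complex^'n) set) f"
proof -
  obtain BD where BD: "independent BD" "span BD = D" using subspace_basisE[OF D] by blast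
  have "BD \<subseteq> S" using BD DS span_base by blast
  then obtain BS where BS: "BD \<subseteq> BS" "BS \<subseteq> S" "independent BS" "S \<subseteq> span BS"
    using maximal_independent_subset_extend[OF _ BD(1)] by blast
  have spS: "span BS = S" using BS span_minimal[OF BS(2) S] by blast
  have finS: "finite BS" using finiteI_independent[OF BS(3)] .
  have "trace_on S f = trace_basis BS f" by (rule trace_on_eq_trace_basis[OF BS(3) spS f])
    (use fSD DS in blast)
  also have "\<dots> = (\<Sum>b\<in>BS. if b \<in> BD then representation BD (f b) b else 0)"
    unfolding trace_basis_def
  proof (rule sum.cong[OF refl])
    fix b assume b: "b \<in> BS"
    have "f b \<in> span BD" using fSD BS(2) b BD by blast
    then have "f b = (\<Sum>c\<in>BD. representation BD (f b) c *\<^sub>R id c)"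
      using representation_expansion[OF BD(1)] by simp
    then show "representation BS (f b) b = (if b \<in> BD then representation BD (f b) b else 0)"
      using representation_sum_image[OF BS(3) _ inj_on_id, of BD "representation BD (f b)" b] BS(1)
      by auto
  qed
  also have "\<dots> = (\<Sum>b\<in>BD. representation BD (f b) b)"
    using finS BS(1) by (simp add: sum.inter_restrict[symmetric] Int_absorb1)
  also have "\<dots> = trace_on D f"
  proof -
    have "trace_on D f = trace_basis BD f" by (rule trace_on_eq_trace_basis[OF BD f])
      (use fSD DS in blast)
    then show ?thesis by (simp add: trace_basis_def)
  qed
  finally show ?thesis .
qed

lemma trace_UNIV_real_form:
  assumes rf: "real_form br S" and f: "linear f" and fi: "\<And>v. f (\<i> *s v) = \<i> *s f v"
    and fS: "\<And>v. v \<in> S \<Longrightarrow> f v \<in> S"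
  shows "trace_on UNIV f = 2 * trace_on S f"
    and "trace_on UNIV (\<lambda>v. \<i> *s f v) = 0"
proof -
  obtain B where B: "independent B" "span B = S"
    using subspace_basisE[OF real_form_subspace[OF rf]] by blast
  show "trace_on UNIV f = 2 * trace_on S f" "trace_on UNIV (\<lambda>v. \<i> *s f v) = 0"
    using complexified_basis_trace_UNIV[OF rf B f fi fS] by simp_all
qed

section \<open>Killing forms of real forms\<close>

context complex_lie_algebra
begin

lemma killing_UNIV_add_left:
  "killing br UNIV (x1 + x2) y = killing br UNIV x1 y + killing br UNIV x2 y"
  unfolding killing_def using trace_on_add[OF subspace_UNIV linear_bracket2 linear_bracket2] by simp

lemma killing_UNIV_add_right:
  "killing br UNIV x (y1 + y2) = killing br UNIV x y1 + killing br UNIV x y2"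
  unfolding killing_def using trace_on_add[OF subspace_UNIV linear_bracket2 linear_bracket2] by simp

lemma killing_neg_right:
  assumes "subspace S" and "\<And>x y. x \<in> S \<Longrightarrow> y \<in> S \<Longrightarrow> br x y \<in> S" and "x \<in> S" "y \<in> S"
  shows "killing br S x (- y) = - killing br S x y"
  unfolding killing_def using trace_on_neg[OF assms(1) linear_bracket2] assms by simp

lemma killing_UNIV_real_form:
  assumes rf: "real_form br S" and x: "x \<in> S" and y: "y \<in> S"
  shows "killing br UNIV x y = 2 * killing br S x y"
  unfolding killing_def
  by (rule trace_UNIV_real_form(1)[OF rf linear_bracket2])
    (use real_form_bracket[OF rf] x y in auto)

lemma killing_UNIV_real_imag:
  assumes rf: "real_form br S" and x: "x \<in> S" and y: "y \<in> S"
  shows "killing br UNIV x (\<i> *s y) = 0" and "killing br UNIV (\<i> *s x) y = 0"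
proof -
  have "trace_on UNIV (\<lambda>v. \<i> *s br x (br y v)) = 0"
    by (rule trace_UNIV_real_form(2)[OF rf linear_bracket2])
      (use real_form_bracket[OF rf] x y in auto)
  then show "killing br UNIV x (\<i> *s y) = 0" "killing br UNIV (\<i> *s x) y = 0"
    unfolding killing_def by simp_all
qed

lemma killing_UNIV_imag_imag: "killing br UNIV (\<i> *s x) (\<i> *s y) = - killing br UNIV x y"
proof -
  have "killing br UNIV (\<i> *s x) (\<i> *s y) = trace_on UNIV (\<lambda>v. - br x (br y v))"
    unfolding killing_def by simp
  also have "\<dots> = - killing br UNIV x y"
    unfolding killing_def by (rule trace_on_neg[OF subspace_UNIV linear_bracket2]) simp
  finally show ?thesis .
qed

lemma killing_real_form_parts:
  assumes rfS: "real_form br S" and rfT: "real_form br T" and x: "x \<in> T" and y: "y \<in> T"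
  shows "killing br T x y
    = killing br S (rf_re S x) (rf_re S y) - killing br S (rf_im S x) (rf_im S y)"
proof -
  define a b c d where "a = rf_re S x" "b = rf_im S x" "c = rf_re S y" "d = rf_im S y"
  have abcd: "a \<in> S" "b \<in> S" "c \<in> S" "d \<in> S"
    using rf_parts[OF rfS] a_b_c_d_def by auto
  have "2 * killing br T x y = killing br UNIV x y"
    using killing_UNIV_real_form[OF rfT x y] by simp
  also have "\<dots> = killing br UNIV (a + \<i> *s b) (c + \<i> *s d)"
    using rf_decomp[OF rfS, of x] rf_decomp[OF rfS, of y] a_b_c_d_def by metis
  also have "\<dots> = killing br UNIV a c + killing br UNIV a (\<i> *s d) + killing br UNIV (\<i> *s b) c
      + killing br UNIV (\<i> *s b) (\<i> *s d)"
    by (simp add: killing_UNIV_add_left killing_UNIV_add_right)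
  also have "\<dots> = 2 * killing br S a c - 2 * killing br S b d"
    using killing_UNIV_real_form[OF rfS] killing_UNIV_real_imag[OF rfS]
      killing_UNIV_imag_imag abcd by simp
  finally show ?thesis
    using a_b_c_d_def by simp
qed

lemma trace_on_bracket_invariant:
  assumes D: "subspace D"
    and w: "\<And>v. v \<in> D \<Longrightarrow> br w v \<in> D" and y: "\<And>v. v \<in> D \<Longrightarrow> br y v \<in> D"
    and z: "\<And>v. v \<in> D \<Longrightarrow> br z v \<in> D"
  shows "trace_on D (\<lambda>v. br (br w y) (br z v)) = trace_on D (\<lambda>v. br w (br (br y z) v))"
proof -
  have l3: "linear (\<lambda>v. br a (br b (br c v)))" for a b c
    using linear_compose[OF linear_bracket linear_bracket2] by (simp add: o_def)
  have "trace_on D (\<lambda>v. br (br w y) (br z v))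
      = trace_on D (\<lambda>v. br w (br y (br z v)) - br y (br w (br z v)))"
    by (intro arg_cong[where f = "trace_on D"] ext) (simp add: bracket_leibniz[of w y])
  also have "\<dots> = trace_on D (\<lambda>v. br w (br y (br z v))) - trace_on D (\<lambda>v. br y (br w (br z v)))"
    by (rule trace_on_diff[OF D l3 l3]) (use w y z in auto)
  also have "trace_on D (\<lambda>v. br y (br w (br z v))) = trace_on D (\<lambda>v. br w (br z (br y v)))"
    using trace_on_comm[OF D linear_bracket linear_bracket2, of y w z] w y z by auto
  also have "trace_on D (\<lambda>v. br w (br y (br z v))) - trace_on D (\<lambda>v. br w (br z (br y v)))
      = trace_on D (\<lambda>v. br w (br y (br z v)) - br w (br z (br y v)))"
    by (rule trace_on_diff[OF D l3 l3, symmetric]) (use w y z in auto)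
  also have "\<dots> = trace_on D (\<lambda>v. br w (br (br y z) v))"
    by (intro arg_cong[where f = "trace_on D"] ext) (simp add: bracket_leibniz[of y z])
  finally show ?thesis .
qed

end

section \<open>The involution \<open>\<tau>\<^sub>h\<close> of an Euler element\<close>

definition tau_euler ::
    "(complex^'n \<Rightarrow> complex^'n \<Rightarrow> complex^'n) \<Rightarrow> complex^'n \<Rightarrow> complex^'n \<Rightarrow> complex^'n" where
  "tau_euler br h v = v - 2 *\<^sub>R br h (br h v)"

text \<open>On the \<open>j\<close>-eigenspace of \<open>ad h\<close> this is multiplication by \<open>1 - 2 j\<^sup>2 = (-1)\<^sup>j\<close>
  for \<open>j \<in> {-1, 0, 1}\<close>, i.e. it is a closed formula for \<open>\<tau>\<^sub>h\<close>.\<close>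

lemma bounded_linear_smult_left: "bounded_linear (\<lambda>c::complex. c *s (a::complex^'n))"
proof -
  have "linear (\<lambda>c::complex. c *s a)"
    by (rule linearI) (simp_all add: vector_sadd_rdistrib vec_eq_iff scaleR_complex)
  then show ?thesis
    using linear_conv_bounded_linear by blast
qed

lemma exp_series_smult:
  "(\<lambda>k. (t ^ k / fact k) *\<^sub>R (w ^ k *s (a::complex^'n))) sums (exp (complex_of_real t * w) *s a)"
proof -
  have "(\<lambda>k. ((complex_of_real t * w) ^ k /\<^sub>R fact k) *s a) sums (exp (complex_of_real t * w) *s a)"
    by (rule bounded_linear.sums[OF bounded_linear_smult_left exp_converges])
  moreover have "((complex_of_real t * w) ^ k /\<^sub>R fact k) *s a
    = (t ^ k / fact k) *\<^sub>R (w ^ k *s a)" for k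
    by (simp add: vec_eq_iff scaleR_complex power_mult_distrib divide_inverse)
  ultimately show ?thesis
    by simp
qed

context complex_lie_algebra
begin

lemma tau_euler_add: "tau_euler br h (x + y) = tau_euler br h x + tau_euler br h y"
  and tau_euler_scaleR: "tau_euler br h (r *\<^sub>R x) = r *\<^sub>R tau_euler br h x"
  and tau_euler_diff: "tau_euler br h (x - y) = tau_euler br h x - tau_euler br h y"
  and tau_euler_smult: "tau_euler br h (c *s x) = c *s tau_euler br h x"
  and tau_euler_neg: "tau_euler br h (- x) = - tau_euler br h x"
  and tau_euler_uminus [simp]: "tau_euler br (- h) = tau_euler br h"
  by (simp_all add: tau_euler_def fun_eq_iff algebra_simps)

lemmas tau_euler_linear = tau_euler_add tau_euler_scaleR tau_euler_diff tau_euler_smult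
  tau_euler_neg

lemma euler_elem_decomp:
  assumes "euler_elem br S h" and "v \<in> S"
  obtains a b c where "a \<in> S" "b \<in> S" "c \<in> S" "br h a = - a" "br h b = 0" "br h c = c"
    "v = a + b + c"
  using assms unfolding euler_elem_def eigsp_def by force

lemma euler_elem_cube:
  assumes "euler_elem br S h" and "v \<in> S"
  shows "br h (br h (br h v)) = br h v"
proof -
  obtain a b c where "br h a = - a" "br h b = 0" "br h c = c" "v = a + b + c"
    using euler_elem_decomp[OF assms] by metis
  then show ?thesis
    by simp
qed

lemma tau_h_eq_tau_euler:
  assumes "euler_elem br S h" and "v \<in> S"
  shows "tau_h br S h v = tau_euler br h v"
  unfolding tau_h_def
proof (rule the_equality)
  have key: "- a + b - c = tau_euler br h v"
    if "a \<in> eigsp br S h (-1)" "b \<in> eigsp br S h 0" "c \<in> eigsp br S h 1" "v = a + b + c" for a b c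
    using that by (simp add: eigsp_def tau_euler_def scaleR_2 algebra_simps)
  obtain a b c where "a \<in> eigsp br S h (-1)" "b \<in> eigsp br S h 0" "c \<in> eigsp br S h 1"
    "v = a + b + c"
    using assms unfolding euler_elem_def by blast
  with key show "\<exists>a b c. a \<in> eigsp br S h (-1) \<and> b \<in> eigsp br S h 0 \<and> c \<in> eigsp br S h 1 \<and>
      v = a + b + c \<and> tau_euler br h v = - a + b - c"
    by metis
  show "w = tau_euler br h v" if "\<exists>a b c. a \<in> eigsp br S h (-1) \<and> b \<in> eigsp br S h 0 \<and>
      c \<in> eigsp br S h 1 \<and> v = a + b + c \<and> w = - a + b - c" for w
    using key that by metis
qed

lemma cube_eigen_decomp:
  assumes S: "subspace S" and cl: "\<And>v. v \<in> S \<Longrightarrow> br h v \<in> S" and v: "v \<in> S"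
    and cube: "br h (br h (br h v)) = br h v"
  obtains a b c where "a \<in> S" "b \<in> S" "c \<in> S"
    "br h a = (-1) *\<^sub>R a" "br h b = 0 *\<^sub>R b" "br h c = 1 *\<^sub>R c" "v = a + b + c"
proof
  let ?A = "br h v" and ?A2 = "br h (br h v)"
  have A: "?A \<in> S" "?A2 \<in> S"
    using cl v by auto
  show "(1/2) *\<^sub>R (?A2 - ?A) \<in> S" "v - ?A2 \<in> S" "(1/2) *\<^sub>R (?A2 + ?A) \<in> S"
    using A v by (simp_all add: subspace_scale[OF S] subspace_diff[OF S] subspace_add[OF S])
  show "br h ((1/2) *\<^sub>R (?A2 - ?A)) = (-1) *\<^sub>R ((1/2) *\<^sub>R (?A2 - ?A))"
    and "br h (v - ?A2) = 0 *\<^sub>R (v - ?A2)"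
    and "br h ((1/2) *\<^sub>R (?A2 + ?A)) = 1 *\<^sub>R ((1/2) *\<^sub>R (?A2 + ?A))"
    using cube by (simp_all add: algebra_simps)
  show "v = (1/2) *\<^sub>R (?A2 - ?A) + (v - ?A2) + (1/2) *\<^sub>R (?A2 + ?A)"
    by (simp add: vec_eq_iff scaleR_complex field_simps)
qed

lemma euler_elem_iff_cube:
  assumes S: "subspace S" and h: "h \<in> S" and cl: "\<And>v. v \<in> S \<Longrightarrow> br h v \<in> S"
  shows "euler_elem br S h \<longleftrightarrow> (\<exists>y\<in>S. br h y \<noteq> 0) \<and> (\<forall>v\<in>S. br h (br h (br h v)) = br h v)"
proof
  assume "euler_elem br S h"
  then show "(\<exists>y\<in>S. br h y \<noteq> 0) \<and> (\<forall>v\<in>S. br h (br h (br h v)) = br h v)"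
    using euler_elem_cube by (auto simp: euler_elem_def)
next
  assume *: "(\<exists>y\<in>S. br h y \<noteq> 0) \<and> (\<forall>v\<in>S. br h (br h (br h v)) = br h v)"
  have "\<exists>a b c. a \<in> eigsp br S h (-1) \<and> b \<in> eigsp br S h 0 \<and> c \<in> eigsp br S h 1 \<and> v = a + b + c"
    if v: "v \<in> S" for v
  proof -
    obtain a b c where "a \<in> S" "b \<in> S" "c \<in> S"
      "br h a = (-1) *\<^sub>R a" "br h b = 0 *\<^sub>R b" "br h c = 1 *\<^sub>R c" "v = a + b + c"
      using cube_eigen_decomp[OF S cl v] * v by blast
    then show ?thesis
      unfolding eigsp_def by blast
  qed
  with * h show "euler_elem br S h"
    unfolding euler_elem_def by blast
qed

lemma euler_elem_real_form_iff:
  assumes rf: "real_form br T" and h: "h \<in> T"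
  shows "euler_elem br T h \<longleftrightarrow> euler_elem br UNIV h"
proof -
  have cl: "\<And>v. v \<in> T \<Longrightarrow> br h v \<in> T"
    using real_form_bracket[OF rf h] .
  have decomp: "\<exists>p\<in>T. \<exists>q\<in>T. v = p + \<i> *s q" for v
    using rf_parts[OF rf] by blast
  have "br h y = 0" if "\<forall>y\<in>T. br h y = 0" for y
    using decomp[of y] that by auto
  then have "(\<exists>y\<in>T. br h y \<noteq> 0) \<longleftrightarrow> (\<exists>y. br h y \<noteq> 0)"
    by blast
  moreover have "br h (br h (br h v)) = br h v" if "\<forall>v\<in>T. br h (br h (br h v)) = br h v" for v
    using decomp[of v] that by auto
  ultimately show ?thesis
    using euler_elem_iff_cube[OF real_form_subspace[OF rf] h cl]
      euler_elem_iff_cube[OF subspace_UNIV]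
    by auto
qed

lemma euler_elem_bracket_mem:
  assumes "subspace S" "euler_elem br S h" "v \<in> S"
  shows "br h v \<in> S"
proof -
  obtain a b c where "a \<in> S" "c \<in> S" "br h a = - a" "br h b = 0" "br h c = c" "v = a + b + c"
    using euler_elem_decomp[OF assms(2,3)] by metis
  then show ?thesis
    by (simp add: subspace_diff[OF assms(1)])
qed

lemma euler_elem_uminus:
  assumes "subspace S" and "euler_elem br S h"
  shows "euler_elem br S (- h)"
proof -
  have "h \<in> S"
    using assms(2) unfolding euler_elem_def by blast
  then show ?thesis
    using assms euler_elem_iff_cube[OF assms(1)] euler_elem_bracket_mem[OF assms]
      subspace_neg[OF assms(1)] by auto
qed

lemma exp_ad_pi_eq_tau_euler:
  assumes e: "euler_elem br UNIV (\<i> *s z)"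
  shows "exp_ad br pi z = tau_euler br (\<i> *s z)"
proof
  fix v
  obtain a b c where "br (\<i> *s z) a = - a" "br (\<i> *s z) b = 0" "br (\<i> *s z) c = c"
    and v: "v = a + b + c"
    using euler_elem_decomp[OF e UNIV_I] by metis
  then have "(- \<i>) *s (\<i> *s br z a) = (- \<i>) *s (- a)" "(- \<i>) *s (\<i> *s br z b) = 0"
      "(- \<i>) *s (\<i> *s br z c) = (- \<i>) *s c"
    by simp_all
  then have A: "br z a = \<i> *s a" "br z b = 0" "br z c = (- \<i>) *s c"
    by (simp_all add: vec_eq_iff)
  have pa: "(br z ^^ k) a = (\<i> ^ k) *s a" for k
    by (induct k) (simp_all add: A mult.commute)
  have pc: "(br z ^^ k) c = ((- \<i>) ^ k) *s c" for k
    by (induct k) (simp_all add: A mult.commute)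
  have sa: "(\<lambda>k. (pi ^ k / fact k) *\<^sub>R (br z ^^ k) a) sums (- a)"
    using exp_series_smult[of pi \<i> a] by (simp add: pa exp_pi_i' mult.commute)
  have sb: "(\<lambda>k. (pi ^ k / fact k) *\<^sub>R (br z ^^ k) b) sums b"
  proof -
    have "(br z ^^ k) b = (if k = 0 then b else 0)" for k
      by (induct k) (simp_all add: A)
    then show ?thesis
      using sums_single[of 0 "\<lambda>_. b"] by (simp add: if_distrib[of "scaleR _"] cong: if_cong)
  qed
  have sc: "(\<lambda>k. (pi ^ k / fact k) *\<^sub>R (br z ^^ k) c) sums (- c)"
  proof -
    have "exp (complex_of_real pi * (- \<i>)) = -1"
      by (metis exp_pi_i' exp_minus mult.commute mult_minus_right inverse_minus_eq inverse_1)
    then show ?thesis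
      using exp_series_smult[of pi "- \<i>" c] by (simp add: pc)
  qed
  have "(\<lambda>k. (pi ^ k / fact k) *\<^sub>R (br z ^^ k) v) sums (- a + b + - c)"
    using sums_add[OF sums_add[OF sa sb] sc] by (simp add: v funpow_bracket_add scaleR_add_right)
  then have "exp_ad br pi z v = - a + b - c"
    unfolding exp_ad_def by (simp add: sums_iff)
  also have "\<dots> = tau_euler br (\<i> *s z) v"
    by (simp add: v A tau_euler_def vec_eq_iff scaleR_complex field_simps)
  finally show "exp_ad br pi z v = tau_euler br (\<i> *s z) v" .
qed

lemma tau_euler_mem:
  assumes "subspace T" "\<And>x y. x \<in> T \<Longrightarrow> y \<in> T \<Longrightarrow> br x y \<in> T" "h \<in> T" "v \<in> T"
  shows "tau_euler br h v \<in> T"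
  unfolding tau_euler_def using assms by (simp add: subspace_diff subspace_scale)

context
  fixes h
  assumes cube: "\<And>v. br h (br h (br h v)) = br h v"
begin

lemma tau_euler_involutive: "tau_euler br h (tau_euler br h v) = v"
  by (simp add: tau_euler_def cube algebra_simps)

lemma tau_euler_eigen: "br h u = \<alpha> *\<^sub>R u \<Longrightarrow> tau_euler br h u = (1 - 2 * \<alpha>\<^sup>2) *\<^sub>R u"
  by (simp add: tau_euler_def power2_eq_square algebra_simps)

lemma tau_euler_bracket_eigen_pair:
  assumes u: "br h u = \<alpha> *\<^sub>R u" and w: "br h w = \<beta> *\<^sub>R w"
    and \<alpha>: "\<alpha> \<in> {-1, 0, 1}" and \<beta>: "\<beta> \<in> {-1, 0, 1}"
  shows "tau_euler br h (br u w) = br (tau_euler br h u) (tau_euler br h w)"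
proof -
  have uw: "br h (br u w) = (\<alpha> + \<beta>) *\<^sub>R br u w"
    using u w by (simp add: bracket_leibniz[of h u w] scaleR_add_left)
  have rhs: "br (tau_euler br h u) (tau_euler br h w) = ((1 - 2 * \<alpha>\<^sup>2) * (1 - 2 * \<beta>\<^sup>2)) *\<^sub>R br u w"
    by (simp add: tau_euler_eigen[OF u] tau_euler_eigen[OF w])
  show ?thesis
  proof (cases "\<alpha> + \<beta> = 2 \<or> \<alpha> + \<beta> = -2")
    case True
    text \<open>\<open>\<plusminus>2\<close> is not an eigenvalue of \<open>ad h\<close>, because \<open>(ad h)\<^sup>3 = ad h\<close>.\<close>
    let ?\<gamma> = "\<alpha> + \<beta>"
    have "br h (br h (br h (br u w))) = (?\<gamma> * ?\<gamma> * ?\<gamma>) *\<^sub>R br u w"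
      by (simp add: uw)
    with cube[of "br u w"] uw have "(?\<gamma> * ?\<gamma> * ?\<gamma> - ?\<gamma>) *\<^sub>R br u w = 0"
      by (simp add: scaleR_diff_left)
    moreover have "?\<gamma> * ?\<gamma> * ?\<gamma> - ?\<gamma> \<noteq> 0"
      using True by auto
    ultimately have "br u w = 0"
      by simp
    then show ?thesis
      using rhs by (simp add: tau_euler_def)
  next
    case False
    then have "1 - 2 * (\<alpha> + \<beta>)\<^sup>2 = (1 - 2 * \<alpha>\<^sup>2) * (1 - 2 * \<beta>\<^sup>2)"
      using \<alpha> \<beta> by (auto simp: power2_eq_square)
    then show ?thesis
      using tau_euler_eigen[OF uw] rhs by simp
  qed
qed

lemma tau_euler_bracket_eigen:
  assumes u: "br h u = \<alpha> *\<^sub>R u" and \<alpha>: "\<alpha> \<in> {-1, 0, 1}"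
  shows "tau_euler br h (br u y) = br (tau_euler br h u) (tau_euler br h y)"
proof -
  obtain a b c where abc: "br h a = (-1) *\<^sub>R a" "br h b = 0 *\<^sub>R b" "br h c = 1 *\<^sub>R c"
    and y: "y = a + b + c"
    using cube_eigen_decomp[OF subspace_UNIV _ UNIV_I cube] by blast
  show ?thesis
    unfolding y using tau_euler_bracket_eigen_pair[OF u abc(1) \<alpha>]
      tau_euler_bracket_eigen_pair[OF u abc(2) \<alpha>] tau_euler_bracket_eigen_pair[OF u abc(3) \<alpha>]
    by (simp add: tau_euler_linear)
qed

lemma tau_euler_bracket: "tau_euler br h (br x y) = br (tau_euler br h x) (tau_euler br h y)"
proof -
  obtain a b c where abc: "br h a = (-1) *\<^sub>R a" "br h b = 0 *\<^sub>R b" "br h c = 1 *\<^sub>R c"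
    and x: "x = a + b + c"
    using cube_eigen_decomp[OF subspace_UNIV _ UNIV_I cube] by blast
  show ?thesis
    unfolding x using tau_euler_bracket_eigen[OF abc(1)] tau_euler_bracket_eigen[OF abc(2)]
      tau_euler_bracket_eigen[OF abc(3)]
    by (simp add: tau_euler_linear)
qed

lemma lie_involution_tau_euler:
  assumes "\<And>v. v \<in> T \<Longrightarrow> tau_euler br h v \<in> T"
  shows "lie_involution br T (tau_euler br h)"
  unfolding lie_involution_def
  using assms by (simp add: tau_euler_linear tau_euler_bracket tau_euler_involutive)

end

end

section \<open>Semisimplicity and perfectness pass between real forms\<close>

definition complexification :: "(complex^'n) set \<Rightarrow> (complex^'n) set" where
  "complexification X = {a + \<i> *s b | a b. a \<in> X \<and> b \<in> X}"

definition sum_space :: "(complex^'n) set \<Rightarrow> (complex^'n) set \<Rightarrow> (complex^'n) set" where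
  "sum_space X Y = {x + y | x y. x \<in> X \<and> y \<in> Y}"

lemma subspace_sum_space: "subspace X \<Longrightarrow> subspace Y \<Longrightarrow> subspace (sum_space X Y)"
  unfolding sum_space_def by (rule subspace_sums)

lemma subspace_complexification:
  assumes "subspace X"
  shows "subspace (complexification X)"
proof -
  have "complexification X = sum_space X ((\<lambda>b. \<i> *s b) ` X)"
    unfolding complexification_def sum_space_def by blast
  then show ?thesis
    using subspace_sum_space[OF assms linear_subspace_image[OF linear_smult_i assms]] by simp
qed

lemma complexification_smult_i:
  assumes "subspace X" and "v \<in> complexification X"
  shows "\<i> *s v \<in> complexification X"
proof -
  obtain a b where "a \<in> X" "b \<in> X" "v = a + \<i> *s b"
    using assms(2) unfolding complexification_def by blast
  moreover from this have "\<i> *s v = (- b) + \<i> *s a"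
    by (simp add: algebra_simps)
  ultimately show ?thesis
    unfolding complexification_def using subspace_neg[OF assms(1)] by blast
qed

lemma complexification_mono: "X \<subseteq> Y \<Longrightarrow> complexification X \<subseteq> complexification Y"
  unfolding complexification_def by blast

lemma complexification_zero: "complexification {0} = {0}"
  unfolding complexification_def by auto

lemma subset_complexification: "subspace X \<Longrightarrow> X \<subseteq> complexification X"
  unfolding complexification_def using subspace_0 by force

lemma complexification_real_form: "real_form br T \<Longrightarrow> complexification T = UNIV"
  unfolding complexification_def using rf_parts by blast

context complex_lie_algebra
begin

lemma derived_mono: "A \<subseteq> B \<Longrightarrow> derived br A \<subseteq> derived br B"
  unfolding derived_def by (rule span_mono) blast

lemma derived_funpow_mono: "A \<subseteq> B \<Longrightarrow> (derived br ^^ k) A \<subseteq> (derived br ^^ k) B"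
  by (induct k) (simp_all add: derived_mono)

lemma subspace_derived: "subspace (derived br A)"
  unfolding derived_def by (rule subspace_span)

lemma subspace_derived_funpow: "subspace A \<Longrightarrow> subspace ((derived br ^^ k) A)"
  by (cases k) (simp_all add: subspace_derived)

lemma derived_bracket_mem: "x \<in> S \<Longrightarrow> y \<in> S \<Longrightarrow> br x y \<in> derived br S"
  unfolding derived_def by (intro span_base) blast

lemma derived_subset:
  "subspace X \<Longrightarrow> (\<And>x y. x \<in> X \<Longrightarrow> y \<in> X \<Longrightarrow> br x y \<in> X) \<Longrightarrow> derived br X \<subseteq> X"
  unfolding derived_def by (rule span_minimal) auto

lemma solvable_lieI: "subspace I \<Longrightarrow> (derived br ^^ k) I \<subseteq> {0} \<Longrightarrow> solvable_lie br I"
  unfolding solvable_lie_def using subspace_0[OF subspace_derived_funpow] by blast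

lemma solvable_lieD: "solvable_lie br I \<Longrightarrow> \<exists>k. (derived br ^^ k) I \<subseteq> {0}"
  unfolding solvable_lie_def by blast

lemma derived_complexification:
  assumes "subspace X"
  shows "derived br (complexification X) \<subseteq> complexification (derived br X)"
  unfolding derived_def[of br "complexification X"]
proof (rule span_minimal[OF _ subspace_complexification[OF subspace_derived]], safe)
  fix x y assume "x \<in> complexification X" "y \<in> complexification X"
  then obtain a b c d where abcd: "a \<in> X" "b \<in> X" "c \<in> X" "d \<in> X"
    and "x = a + \<i> *s b" "y = c + \<i> *s d"
    unfolding complexification_def by blast
  then have "br x y = (br a c - br b d) + \<i> *s (br a d + br b c)"
    by (simp only: bracket_complex_parts)
  moreover have "br a c - br b d \<in> derived br X" "br a d + br b c \<in> derived br X"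
    using abcd derived_bracket_mem subspace_diff[OF subspace_derived] subspace_add[OF subspace_derived]
    by auto
  ultimately show "br x y \<in> complexification (derived br X)"
    unfolding complexification_def by blast
qed

lemma derived_funpow_complexification:
  assumes "subspace X"
  shows "(derived br ^^ k) (complexification X) \<subseteq> complexification ((derived br ^^ k) X)"
proof (induct k)
  case (Suc k)
  then have "(derived br ^^ Suc k) (complexification X)
      \<subseteq> derived br (complexification ((derived br ^^ k) X))"
    using derived_mono by simp
  also have "\<dots> \<subseteq> complexification ((derived br ^^ Suc k) X)"
    using derived_complexification[OF subspace_derived_funpow[OF assms]] by simp
  finally show ?case .
qed simp

lemma derived_image:
  assumes f: "linear f" and hom: "\<And>x y. f (br x y) = br (f x) (f y)"
  shows "derived br (f ` A) = f ` derived br A"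
proof -
  have "{br x y |x y. x \<in> f ` A \<and> y \<in> f ` A} = f ` {br x y |x y. x \<in> A \<and> y \<in> A}"
  proof (intro equalityI subsetI)
    fix v assume "v \<in> {br x y |x y. x \<in> f ` A \<and> y \<in> f ` A}"
    then obtain a b where "a \<in> A" "b \<in> A" "v = f (br a b)"
      using hom by auto
    then show "v \<in> f ` {br x y |x y. x \<in> A \<and> y \<in> A}"
      by blast
  qed (use hom in auto)
  then show ?thesis
    unfolding derived_def using span_linear_image[OF f] by simp
qed

lemma derived_funpow_image:
  assumes "linear f" and "\<And>x y. f (br x y) = br (f x) (f y)"
  shows "(derived br ^^ k) (f ` A) = f ` (derived br ^^ k) A"
  by (induct k) (simp_all add: derived_image[OF assms])

lemma derived_sum_space_ideal:
  assumes X: "subspace X" and K: "lie_ideal br UNIV K"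
  shows "derived br (sum_space X K) \<subseteq> sum_space (derived br X) K"
  unfolding derived_def[of br "sum_space X K"]
proof (rule span_minimal[OF _ subspace_sum_space[OF subspace_derived]], safe)
  have Ks: "subspace K" and Kc: "\<And>u w. w \<in> K \<Longrightarrow> br u w \<in> K"
    using K by (simp_all add: lie_ideal_def)
  show "subspace K"
    by (rule Ks)
  fix x y assume "x \<in> sum_space X K" "y \<in> sum_space X K"
  then obtain a k b l where ak: "a \<in> X" "k \<in> K" "b \<in> X" "l \<in> K" "x = a + k" "y = b + l"
    unfolding sum_space_def by blast
  have "br x y = br a b + (br a l - br b k + br k l)"
    using ak bracket_anticomm[of k b] by (simp add: algebra_simps)
  moreover have "br a l - br b k + br k l \<in> K"
    using Kc ak subspace_add[OF Ks] subspace_diff[OF Ks] by simp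
  ultimately show "br x y \<in> sum_space (derived br X) K"
    unfolding sum_space_def using derived_bracket_mem ak by blast
qed

lemma solvable_sum_space:
  assumes J: "lie_ideal br UNIV J" and K: "lie_ideal br UNIV K"
    and sJ: "(derived br ^^ m) J \<subseteq> {0}" and sK: "(derived br ^^ n) K \<subseteq> {0}"
  shows "(derived br ^^ (n + m)) (sum_space J K) \<subseteq> {0}"
proof -
  have Js: "subspace J" and Ks: "subspace K" using J K by (simp_all add: lie_ideal_def)
  have step: "(derived br ^^ k) (sum_space J K) \<subseteq> sum_space ((derived br ^^ k) J) K" for k
  proof (induct k)
    case 0 then show ?case by simp
  next
    case (Suc k)
    have "(derived br ^^ Suc k) (sum_space J K) \<subseteq> derived br (sum_space ((derived br ^^ k) J) K)"
      using derived_mono[OF Suc] by simp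
    also have "\<dots> \<subseteq> sum_space ((derived br ^^ Suc k) J) K"
      using derived_sum_space_ideal[OF subspace_derived_funpow[OF Js] K] by simp
    finally show ?case .
  qed
  have "(derived br ^^ m) (sum_space J K) \<subseteq> K"
  proof
    fix v assume "v \<in> (derived br ^^ m) (sum_space J K)"
    then have "v \<in> sum_space ((derived br ^^ m) J) K" using step[of m] by blast
    then obtain x y where "x \<in> (derived br ^^ m) J" "y \<in> K" "v = x + y" unfolding sum_space_def
      by blast
    then show "v \<in> K" using sJ by auto
  qed
  then have "(derived br ^^ n) ((derived br ^^ m) (sum_space J K)) \<subseteq> (derived br ^^ n) K"
    by (rule derived_funpow_mono)
  moreover have "(derived br ^^ (n + m)) (sum_space J K)
    = (derived br ^^ n) ((derived br ^^ m) (sum_space J K))"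
    by (simp only: funpow_add comp_def)
  ultimately show ?thesis using sK by auto
qed

lemma lie_ideal_complexification:
  assumes rf: "real_form br T" and I: "lie_ideal br T I"
  shows "lie_ideal br UNIV (complexification I)"
proof -
  have Is: "subspace I" and Ic: "\<And>x y. x \<in> T \<Longrightarrow> y \<in> I \<Longrightarrow> br x y \<in> I"
    using I by (auto simp: lie_ideal_def)
  have "br x y \<in> complexification I" if y: "y \<in> complexification I" for x y
  proof -
    obtain a b where ab: "a \<in> I" "b \<in> I" "y = a + \<i> *s b"
      using y unfolding complexification_def by blast
    obtain p q where pq: "p \<in> T" "q \<in> T" "x = p + \<i> *s q"
      using rf_parts[OF rf] by blast
    have "br x y = (br p a - br q b) + \<i> *s (br p b + br q a)"
      using ab pq by (simp only: bracket_complex_parts)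
    moreover have "br p a - br q b \<in> I" "br p b + br q a \<in> I"
      using Ic pq ab subspace_diff[OF Is] subspace_add[OF Is] by auto
    ultimately show ?thesis
      unfolding complexification_def by blast
  qed
  then show ?thesis
    unfolding lie_ideal_def using subspace_complexification[OF Is] by blast
qed

lemma conj_stable_subspace_trivial:
  assumes rf: "real_form br S" and M: "subspace M"
    and conj: "\<And>m. m \<in> M \<Longrightarrow> rf_conj S m \<in> M" and i: "\<And>m. m \<in> M \<Longrightarrow> \<i> *s m \<in> M"
    and real: "M \<inter> S \<subseteq> {0}"
  shows "M \<subseteq> {0}"
proof
  have conj_neg: "rf_conj S m = - m" if "m \<in> M" for m
  proof -
    have "m + rf_conj S m \<in> M \<inter> S"
      using subspace_add[OF M that conj[OF that]] rf_conj_add_self[OF rf, of m]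
        subspace_scale[OF real_form_subspace[OF rf] rf_re_mem[OF rf]] by simp
    with real have "m + rf_conj S m = 0"
      by blast
    then show ?thesis
      by (simp add: eq_neg_iff_add_eq_0 add.commute)
  qed
  fix m assume "m \<in> M"
  have "- (\<i> *s m) = rf_conj S (\<i> *s m)"
    using conj_neg[OF i[OF \<open>m \<in> M\<close>]] by simp
  also have "\<dots> = \<i> *s m"
    using conj_neg[OF \<open>m \<in> M\<close>] by (simp add: rf_conj_smult_i[OF rf])
  finally have "\<i> *s (\<i> *s m) = 0"
    by simp
  then show "m \<in> {0}"
    by simp
qed

lemma solvable_complex_ideal_trivial:
  assumes rf: "real_form br S" and ss: "semisimple br S" and J: "lie_ideal br UNIV J"
    and Ji: "\<And>v. v \<in> J \<Longrightarrow> \<i> *s v \<in> J" and solv: "(derived br ^^ k) J \<subseteq> {0}"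
  shows "J \<subseteq> {0}"
proof -
  let ?\<sigma> = "rf_conj S"
  have Js: "subspace J" and Jc: "\<And>x y. y \<in> J \<Longrightarrow> br x y \<in> J"
    using J by (auto simp: lie_ideal_def)
  define K where "K = ?\<sigma> ` J"
  have Ks: "subspace K"
    unfolding K_def by (rule linear_subspace_image[OF linear_rf_conj[OF rf] Js])
  have Kc: "br x y \<in> K" if y: "y \<in> K" for x y
  proof -
    obtain w where w: "w \<in> J" "y = ?\<sigma> w"
      using y unfolding K_def by blast
    then have "br x y = ?\<sigma> (br (?\<sigma> x) w)"
      by (simp add: rf_conj_bracket[OF rf] rf_conj_conj[OF rf])
    then show ?thesis
      unfolding K_def using Jc[OF w(1)] by blast
  qed
  have K: "lie_ideal br UNIV K"
    unfolding lie_ideal_def using Ks Kc by blast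
  have "(derived br ^^ k) K \<subseteq> {0}"
    unfolding K_def derived_funpow_image[OF linear_rf_conj[OF rf] rf_conj_bracket[OF rf]]
    using solv linear_0[OF linear_rf_conj[OF rf]] by blast
  from solvable_sum_space[OF J K solv this]
  have solvM: "(derived br ^^ (k + k)) (sum_space J K) \<subseteq> {0}" .
  define M where "M = sum_space J K"
  have Ms: "subspace M"
    unfolding M_def by (rule subspace_sum_space[OF Js Ks])
  have Mc: "br x y \<in> M" if y: "y \<in> M" for x y
  proof -
    obtain u w where "u \<in> J" "w \<in> K" "y = u + w"
      using y unfolding M_def sum_space_def by blast
    then show ?thesis
      unfolding M_def sum_space_def using Jc Kc by force
  qed
  have "M \<inter> S \<subseteq> {0}"
  proof -
    have MSs: "subspace (M \<inter> S)"
      by (rule subspace_inter[OF Ms real_form_subspace[OF rf]])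
    then have "lie_ideal br S (M \<inter> S)"
      unfolding lie_ideal_def using Mc real_form_bracket[OF rf] by blast
    moreover have "(derived br ^^ (k + k)) (M \<inter> S) \<subseteq> {0}"
      using solvM derived_funpow_mono[of "M \<inter> S" M "k + k"] unfolding M_def by blast
    then have "solvable_lie br (M \<inter> S)"
      by (rule solvable_lieI[OF MSs])
    ultimately show ?thesis
      using ss unfolding semisimple_def by blast
  qed
  moreover have "?\<sigma> m \<in> M" if m: "m \<in> M" for m
  proof -
    obtain u w where "u \<in> J" "w \<in> J" "m = u + ?\<sigma> w"
      using m unfolding M_def sum_space_def K_def by blast
    then have "?\<sigma> m = w + ?\<sigma> u" "w \<in> J" "u \<in> J"
      by (simp_all add: rf_conj_add[OF rf] rf_conj_conj[OF rf] add.commute)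
    then show ?thesis
      unfolding M_def sum_space_def K_def by blast
  qed
  moreover have "\<i> *s m \<in> M" if m: "m \<in> M" for m
  proof -
    obtain u w where uw: "u \<in> J" "w \<in> J" "m = u + ?\<sigma> w"
      using m unfolding M_def sum_space_def K_def by blast
    then have "\<i> *s m = \<i> *s u + ?\<sigma> (- (\<i> *s w))"
      by (simp add: rf_conj_neg[OF rf] rf_conj_smult_i[OF rf])
    moreover have "- (\<i> *s w) \<in> J"
      using Ji[OF uw(2)] subspace_neg[OF Js] by blast
    ultimately show ?thesis
      unfolding M_def sum_space_def K_def using Ji[OF uw(1)] by blast
  qed
  ultimately have "M \<subseteq> {0}"
    using conj_stable_subspace_trivial[OF rf Ms] by blast
  moreover have "J \<subseteq> M"
  proof
    fix v assume "v \<in> J"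
    moreover have "v = v + ?\<sigma> 0" "0 \<in> J"
      using linear_0[OF linear_rf_conj[OF rf]] subspace_0[OF Js] by simp_all
    ultimately show "v \<in> M"
      unfolding M_def sum_space_def K_def by blast
  qed
  ultimately show ?thesis
    by blast
qed

lemma semisimple_real_form_transfer:
  assumes rfS: "real_form br S" and rfT: "real_form br T" and ss: "semisimple br S"
  shows "semisimple br T"
  unfolding semisimple_def
proof (intro allI impI, elim conjE)
  fix I assume I: "lie_ideal br T I" and "solvable_lie br I"
  have Is: "subspace I"
    using I by (simp add: lie_ideal_def)
  obtain k where "(derived br ^^ k) I \<subseteq> {0}"
    using solvable_lieD[OF \<open>solvable_lie br I\<close>] by blast
  then have "(derived br ^^ k) (complexification I) \<subseteq> {0}"
    using derived_funpow_complexification[OF Is, of k] complexification_mono complexification_zero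
    by blast
  then have "complexification I \<subseteq> {0}"
    using solvable_complex_ideal_trivial[OF rfS ss lie_ideal_complexification[OF rfT I]]
      complexification_smult_i[OF Is] by blast
  moreover have "I \<subseteq> complexification I"
    by (rule subset_complexification[OF Is])
  ultimately show "I = {0}"
    using subspace_0[OF Is] by blast
qed

lemma perfect_real_form_transfer:
  assumes rfS: "real_form br S" and rfT: "real_form br T" and dS: "derived br S = S"
  shows "derived br T = T"
proof -
  define D where "D = derived br T"
  have Ds: "subspace D"
    unfolding D_def by (rule subspace_derived)
  have DT: "D \<subseteq> T"
    unfolding D_def by (rule derived_subset[OF real_form_subspace[OF rfT] real_form_bracket[OF rfT]])
  have "S \<subseteq> complexification D"
  proof -
    have "derived br S \<subseteq> derived br (complexification T)"
      by (rule derived_mono) (simp add: complexification_real_form[OF rfT])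
    also have "\<dots> \<subseteq> complexification D"
      unfolding D_def by (rule derived_complexification[OF real_form_subspace[OF rfT]])
    finally show ?thesis
      using dS by simp
  qed
  have "T \<subseteq> D"
  proof
    fix v assume v: "v \<in> T"
    have "rf_re S v + \<i> *s rf_im S v \<in> complexification D"
      using rf_parts[OF rfS] \<open>S \<subseteq> complexification D\<close> complexification_smult_i[OF Ds]
        subspace_add[OF subspace_complexification[OF Ds]] by blast
    then obtain d1 d2 where d: "d1 \<in> D" "d2 \<in> D" "v = d1 + \<i> *s d2"
      unfolding complexification_def using rf_decomp[OF rfS, of v] by auto
    then have "rf_re T v = d1"
      using rf_parts_unique[OF rfT, of d1 d2 v] DT by auto
    with v d(1) show "v \<in> D"
      using rf_parts_real[OF rfT v] by simp
  qed
  with DT show ?thesis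
    unfolding D_def by blast
qed

end

section \<open>Perfectness from a Cartan involution\<close>

lemma linear_inj_on_subspace_onto:
  assumes G: "linear G" and D: "subspace (D::(complex^'n) set)" and GD: "G ` D \<subseteq> D"
    and inj: "inj_on G D"
  shows "G ` D = D"
proof -
  have "inj_on G (span D)"
    using inj span_eq_iff[THEN iffD2, OF D] by metis
  from dim_image_eq[OF G this] have "dim (G ` D) = dim D" .
  then show ?thesis
    using subspace_dim_equal[OF linear_subspace_image[OF G D] D] GD by auto
qed

lemma linear_functional_expansion:
  fixes f :: "complex^'n \<Rightarrow> real"
  assumes B: "independent B" "span B = D"
    and add: "\<And>x y. x \<in> D \<Longrightarrow> y \<in> D \<Longrightarrow> f (x + y) = f x + f y"
    and scale: "\<And>x r. x \<in> D \<Longrightarrow> f (r *\<^sub>R x) = r * f x"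
    and y: "y \<in> D"
  shows "f y = (\<Sum>c\<in>B. representation B y c * f c)"
proof -
  have D: "subspace D"
    using B(2) subspace_span by metis
  have BD: "c \<in> B \<Longrightarrow> c \<in> D" for c
    using B span_base by blast
  have sum: "f (\<Sum>a\<in>A. g a) = (\<Sum>a\<in>A. f (g a))" if "finite A" "\<And>a. a \<in> A \<Longrightarrow> g a \<in> D" for A g
    using that scale[of 0 0] subspace_0[OF D]
    by (induct A rule: finite_induct) (simp_all add: add subspace_sum[OF D])
  have "f y = f (\<Sum>c\<in>B. representation B y c *\<^sub>R c)"
    using representation_expansion[OF B(1)] B(2) y by simp
  also have "\<dots> = (\<Sum>c\<in>B. representation B y c * f c)"
    using sum[OF finiteI_independent[OF B(1)]] scale BD subspace_scale[OF D] by simp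
  finally show ?thesis .
qed

lemma linear_map_with_coordinates:
  fixes P :: "complex^'n \<Rightarrow> complex^'n \<Rightarrow> real"
  assumes B: "independent B" "span B = D"
    and add: "\<And>u1 u2 c. u1 \<in> D \<Longrightarrow> u2 \<in> D \<Longrightarrow> c \<in> B \<Longrightarrow> P (u1 + u2) c = P u1 c + P u2 c"
    and scale: "\<And>u c r. u \<in> D \<Longrightarrow> c \<in> B \<Longrightarrow> P (r *\<^sub>R u) c = r * P u c"
  obtains G where "linear G" "\<And>u. u \<in> D \<Longrightarrow> G u = (\<Sum>c\<in>B. P u c *\<^sub>R c)"
proof -
  let ?R = "representation B"
  obtain G where G: "linear G" "\<And>b. b \<in> B \<Longrightarrow> G b = (\<Sum>c\<in>B. P b c *\<^sub>R c)"
    using linear_independent_extend[OF B(1), of "\<lambda>b. \<Sum>c\<in>B. P b c *\<^sub>R c"] by blast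
  have "G u = (\<Sum>c\<in>B. P u c *\<^sub>R c)" if u: "u \<in> D" for u
  proof -
    have Pexp: "P u c = (\<Sum>b\<in>B. ?R u b * P b c)" if "c \<in> B" for c
      by (rule linear_functional_expansion[OF B, of "\<lambda>u. P u c"]) (use that add scale u in auto)
    have "G u = G (\<Sum>b\<in>B. ?R u b *\<^sub>R b)"
      using representation_expansion[OF B(1)] B(2) u by simp
    also have "\<dots> = (\<Sum>b\<in>B. ?R u b *\<^sub>R (\<Sum>c\<in>B. P b c *\<^sub>R c))"
      by (simp add: linear_sum[OF G(1)] linear_scale[OF G(1)] G(2))
    also have "\<dots> = (\<Sum>c\<in>B. \<Sum>b\<in>B. (?R u b * P b c) *\<^sub>R c)"
      by (subst sum.swap) (simp add: scaleR_sum_right)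
    also have "\<dots> = (\<Sum>c\<in>B. P u c *\<^sub>R c)"
      using Pexp by (simp add: scaleR_sum_left)
    finally show ?thesis .
  qed
  with G(1) show ?thesis
    using that by blast
qed

lemma bilinear_form_represents_functional:
  fixes D :: "(complex^'n) set" and P :: "complex^'n \<Rightarrow> complex^'n \<Rightarrow> real"
    and \<phi> :: "complex^'n \<Rightarrow> real"
  assumes D: "subspace D"
    and Pa: "\<And>u1 u2 y. u1 \<in> D \<Longrightarrow> u2 \<in> D \<Longrightarrow> y \<in> D \<Longrightarrow> P (u1 + u2) y = P u1 y + P u2 y"
    and Ps: "\<And>u y r. u \<in> D \<Longrightarrow> y \<in> D \<Longrightarrow> P (r *\<^sub>R u) y = r * P u y"
    and Pa2: "\<And>u y1 y2. u \<in> D \<Longrightarrow> y1 \<in> D \<Longrightarrow> y2 \<in> D \<Longrightarrow> P u (y1 + y2) = P u y1 + P u y2"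
    and Ps2: "\<And>u y r. u \<in> D \<Longrightarrow> y \<in> D \<Longrightarrow> P u (r *\<^sub>R y) = r * P u y"
    and nondeg: "\<And>u. u \<in> D \<Longrightarrow> P u u = 0 \<Longrightarrow> u = 0"
    and \<phi>a: "\<And>y1 y2. y1 \<in> D \<Longrightarrow> y2 \<in> D \<Longrightarrow> \<phi> (y1 + y2) = \<phi> y1 + \<phi> y2"
    and \<phi>s: "\<And>y r. y \<in> D \<Longrightarrow> \<phi> (r *\<^sub>R y) = r * \<phi> y"
  shows "\<exists>d\<in>D. \<forall>y\<in>D. \<phi> y = P d y"
proof -
  obtain B where B: "independent B" "span B = D"
    using subspace_basisE[OF D] by blast
  have BD: "b \<in> B \<Longrightarrow> b \<in> D" for b
    using B span_base by blast
  have Pexp: "P u y = (\<Sum>c\<in>B. representation B y c * P u c)" if "u \<in> D" "y \<in> D" for u y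
    by (rule linear_functional_expansion[OF B]) (use that Pa2 Ps2 in auto)
  obtain G where G: "linear G" and Gu: "\<And>u. u \<in> D \<Longrightarrow> G u = (\<Sum>c\<in>B. P u c *\<^sub>R c)"
  proof (rule linear_map_with_coordinates[OF B, of P])
    show "P (u1 + u2) c = P u1 c + P u2 c" "P (r *\<^sub>R u) c = r * P u c"
      if "u1 \<in> D" "u2 \<in> D" "u \<in> D" "c \<in> B" for u1 u2 u c r
      using that Pa Ps BD by simp_all
  qed (rule that)
  have coef: "(\<Sum>c\<in>B. a c *\<^sub>R c) = (\<Sum>c\<in>B. b c *\<^sub>R c) \<Longrightarrow> x \<in> B \<Longrightarrow> a x = b x" for a b x
    using representation_sum_subset_basis[OF B(1) order_refl, of a x]
      representation_sum_subset_basis[OF B(1) order_refl, of b x] by simp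
  have sum_mem: "(\<Sum>c\<in>B. a c *\<^sub>R c) \<in> D" for a
    by (rule subspace_sum[OF D]) (simp add: BD subspace_scale[OF D])
  have inj: "inj_on G D"
    unfolding linear_injective_on_subspace_0[OF G D]
  proof (intro ballI impI)
    fix u assume u: "u \<in> D" and "G u = 0"
    then have "(\<Sum>c\<in>B. P u c *\<^sub>R c) = (\<Sum>c\<in>B. 0 *\<^sub>R c)"
      using Gu by simp
    then have "\<forall>c\<in>B. P u c = 0"
      using coef[of "P u" "\<lambda>_. 0"] by simp
    then have "P u u = 0"
      using Pexp[OF u u] by simp
    then show "u = 0"
      using nondeg u by blast
  qed
  have "G ` D = D"
    by (rule linear_inj_on_subspace_onto[OF G D _ inj]) (use Gu sum_mem in auto)
  then have "(\<Sum>c\<in>B. \<phi> c *\<^sub>R c) \<in> G ` D"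
    using sum_mem by simp
  then obtain d where d: "(\<Sum>c\<in>B. \<phi> c *\<^sub>R c) = G d" "d \<in> D"
    by (rule imageE)
  then have "(\<Sum>c\<in>B. P d c *\<^sub>R c) = (\<Sum>c\<in>B. \<phi> c *\<^sub>R c)"
    using Gu by simp
  then have "\<forall>c\<in>B. P d c = \<phi> c"
    using coef[of "P d" \<phi>] by blast
  then have "\<phi> y = P d y" if "y \<in> D" for y
    using linear_functional_expansion[OF B \<phi>a \<phi>s that] Pexp[OF d(2) that] by simp
  with d(2) show ?thesis
    by blast
qed

context complex_lie_algebra
begin

lemma cartan_involution_derived:
  assumes S: "subspace S" and cl: "\<And>x y. x \<in> S \<Longrightarrow> y \<in> S \<Longrightarrow> br x y \<in> S"
    and cart: "cartan_involution br S \<theta>"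
  shows "cartan_involution br (derived br S) \<theta>"
proof -
  let ?D = "derived br S"
  have inv: "lie_involution br S \<theta>"
    using cart by (simp add: cartan_involution_def)
  have DS: "?D \<subseteq> S"
    by (rule derived_subset[OF S cl])
  have "span {br x y |x y. x \<in> S \<and> y \<in> S} \<subseteq> {v \<in> S. \<theta> v \<in> ?D}"
  proof (rule span_minimal)
    show "subspace {v \<in> S. \<theta> v \<in> ?D}"
      unfolding subspace_def
      using lie_involution_zero[OF inv S] lie_involution_add[OF inv] lie_involution_scaleR[OF inv]
        subspace_0[OF S] subspace_add[OF S] subspace_scale[OF S]
          subspace_derived[of S, unfolded subspace_def]
      by auto
    show "{br x y |x y. x \<in> S \<and> y \<in> S} \<subseteq> {v \<in> S. \<theta> v \<in> ?D}"
      using cl lie_involution_bracket[OF inv] lie_involution_mem[OF inv] derived_bracket_mem by auto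
  qed
  then have "?D \<subseteq> {v \<in> S. \<theta> v \<in> ?D}"
    by (simp only: derived_def)
  then have "lie_involution br ?D \<theta>"
    using inv DS unfolding lie_involution_def by blast
  moreover have "- killing br ?D x (\<theta> x) > 0" if "x \<in> ?D" "x \<noteq> 0" for x
  proof -
    have "killing br S x (\<theta> x) = killing br ?D x (\<theta> x)"
      unfolding killing_def
      by (rule trace_on_restrict[OF subspace_derived S DS linear_bracket2])
        (use that DS lie_involution_mem[OF inv] derived_bracket_mem cl in auto)
    then show ?thesis
      using cart that DS unfolding cartan_involution_def by auto
  qed
  ultimately show ?thesis
    unfolding cartan_involution_def by blast
qed

context
  fixes S \<sigma>
  assumes S: "subspace S" and cl: "\<And>x y. x \<in> S \<Longrightarrow> y \<in> S \<Longrightarrow> br x y \<in> S"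
    and cart: "cartan_involution br (derived br S) \<sigma>"
begin

private abbreviation "D \<equiv> derived br S"

private lemma D_sub: "D \<subseteq> S"
  by (rule derived_subset[OF S cl])

private lemma D_ideal: "x \<in> S \<Longrightarrow> v \<in> D \<Longrightarrow> br x v \<in> D"
  using derived_bracket_mem D_sub by blast

private lemma D_bracket: "x \<in> D \<Longrightarrow> y \<in> D \<Longrightarrow> br x y \<in> D"
  using D_ideal D_sub by blast

private lemma \<sigma>_inv: "lie_involution br D \<sigma>"
  using cart by (simp add: cartan_involution_def)

private lemma killing_derived_definite: "w \<in> D \<Longrightarrow> killing br D w (\<sigma> w) = 0 \<Longrightarrow> w = 0"
  using cart unfolding cartan_involution_def by force

private lemma trace_ad_ad_mem: "a \<in> S \<Longrightarrow> b \<in> D \<Longrightarrow> v \<in> D \<Longrightarrow> br a (br b v) \<in> D"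
  using D_ideal D_bracket by blast

lemma derived_center_trivial:
  assumes "w \<in> derived br S" and "\<forall>d\<in>derived br S. br w d = 0"
  shows "w = 0"
proof -
  have "killing br D w (\<sigma> w) = trace_on D (\<lambda>v. 0)"
    unfolding killing_def
    by (rule trace_on_cong[OF subspace_derived])
      (use assms lie_involution_mem[OF \<sigma>_inv] D_bracket in auto)
  then show ?thesis
    using killing_derived_definite[OF assms(1)] trace_on_zero[OF subspace_derived] by simp
qed

text \<open>The centralizer of \<open>[S, S]\<close> is an ideal of \<open>S\<close> whose derived algebra lies in the centre
  of \<open>[S, S]\<close>; so it is solvable, hence zero.\<close>

lemma centralizer_derived_trivial:
  assumes ss: "semisimple br S" and "x \<in> S" and "\<forall>d\<in>derived br S. br x d = 0"
  shows "x = 0"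
proof -
  define C where "C = {x \<in> S. \<forall>d\<in>D. br x d = 0}"
  have Cs: "subspace C"
    unfolding subspace_def C_def using subspace_0[OF S] subspace_add[OF S] subspace_scale[OF S]
    by auto
  have Cc: "br x c \<in> C" if "x \<in> S" "c \<in> C" for x c
  proof -
    have "br (br x c) d = 0" if "d \<in> D" for d
      using \<open>c \<in> C\<close> that D_ideal[OF \<open>x \<in> S\<close> that] bracket_leibniz[of x c d] unfolding C_def by simp
    then show ?thesis
      using that cl unfolding C_def by blast
  qed
  have "derived br C \<subseteq> {0}"
    unfolding derived_def
  proof (rule span_minimal[OF _ subspace_single_0], safe)
    fix c c' assume "c \<in> C" "c' \<in> C"
    then have "br c c' \<in> D" "br c c' \<in> C"
      using derived_bracket_mem Cc unfolding C_def by auto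
    then show "br c c' = 0"
      using derived_center_trivial unfolding C_def by blast
  qed
  then have "solvable_lie br C"
    by (intro solvable_lieI[OF Cs, of 1]) simp
  moreover have "lie_ideal br S C"
    unfolding lie_ideal_def using Cs Cc C_def by auto
  ultimately have "C = {0}"
    using ss unfolding semisimple_def by blast
  then show ?thesis
    using assms(2,3) unfolding C_def by blast
qed

text \<open>\<open>(u, y) \<mapsto> -tr\<^sub>D(ad u ad \<sigma>y)\<close> is positive definite on \<open>D\<close>, so it represents the functional
  \<open>y \<mapsto> tr\<^sub>D(ad x ad \<sigma>y)\<close> for every \<open>x \<in> S\<close>.\<close>

lemma trace_form_derived_represents:
  assumes x: "x \<in> S"
  shows "\<exists>d\<in>derived br S. \<forall>y\<in>derived br S. trace_on D (\<lambda>v. br (x + d) (br y v)) = 0"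
proof -
  define P where "P u y = - trace_on D (\<lambda>v. br u (br (\<sigma> y) v))" for u y
  define \<phi> where "\<phi> y = trace_on D (\<lambda>v. br x (br (\<sigma> y) v))" for y
  note \<sigma> = lie_involution_mem[OF \<sigma>_inv] lie_involution_add[OF \<sigma>_inv] lie_involution_scaleR[OF \<sigma>_inv]
  note tr = trace_on_add[OF subspace_derived linear_bracket2 linear_bracket2]
    trace_on_scale[OF subspace_derived linear_bracket2]
  have "\<exists>d\<in>D. \<forall>y\<in>D. \<phi> y = P d y"
  proof (rule bilinear_form_represents_functional[OF subspace_derived])
    show "P (u1 + u2) y = P u1 y + P u2 y" "P u (y1 + y2) = P u y1 + P u y2"
      if "u1 \<in> D" "u2 \<in> D" "u \<in> D" "y \<in> D" "y1 \<in> D" "y2 \<in> D" for u u1 u2 y y1 y2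
      using that tr trace_ad_ad_mem \<sigma> D_sub unfolding P_def by (auto simp: subset_iff)
    show "P (r *\<^sub>R u) y = r * P u y" "P u (r *\<^sub>R y) = r * P u y" if "u \<in> D" "y \<in> D" for u y r
      using that tr trace_ad_ad_mem \<sigma> D_sub unfolding P_def by (auto simp: subset_iff)
    show "u = 0" if "u \<in> D" "P u u = 0" for u
      using that killing_derived_definite unfolding P_def killing_def by simp
    show "\<phi> (y1 + y2) = \<phi> y1 + \<phi> y2" if "y1 \<in> D" "y2 \<in> D" for y1 y2
      using that tr trace_ad_ad_mem \<sigma> x unfolding \<phi>_def by auto
    show "\<phi> (r *\<^sub>R y) = r * \<phi> y" if "y \<in> D" for y r
      using that tr trace_ad_ad_mem \<sigma> x unfolding \<phi>_def by auto
  qed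
  then obtain d where d: "d \<in> D" "\<And>y. y \<in> D \<Longrightarrow> \<phi> y = P d y"
    by blast
  have "trace_on D (\<lambda>v. br (x + d) (br y v)) = 0" if y: "y \<in> D" for y
  proof -
    have "\<phi> (\<sigma> y) = P d (\<sigma> y)"
      using d(2) \<sigma>(1)[OF y] by blast
    then have "trace_on D (\<lambda>v. br x (br y v)) = - trace_on D (\<lambda>v. br d (br y v))"
      unfolding \<phi>_def P_def using lie_involution_involutive[OF \<sigma>_inv y] by simp
    moreover have "trace_on D (\<lambda>v. br (x + d) (br y v))
        = trace_on D (\<lambda>v. br x (br y v)) + trace_on D (\<lambda>v. br d (br y v))"
      using tr(1) trace_ad_ad_mem x d(1) y D_sub by (simp add: subset_iff)
    ultimately show ?thesis
      by simp
  qed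
  with d(1) show ?thesis
    by blast
qed

text \<open>If \<open>x \<in> S\<close> and \<open>d \<in> D\<close> are as above, then \<open>w = x + d\<close> is orthogonal to \<open>D\<close> for the
  trace form, so by invariance \<open>tr\<^sub>D(ad [w,y] ad \<sigma>[w,y]) = tr\<^sub>D(ad w ad [y, \<sigma>[w,y]]) = 0\<close>;
  definiteness gives \<open>[w, D] = 0\<close> and hence \<open>w = 0\<close>, i.e. \<open>x = -d \<in> D\<close>.\<close>

lemma derived_eq_self_if_cartan_derived:
  assumes ss: "semisimple br S"
  shows "derived br S = S"
proof -
  have "x \<in> D" if x: "x \<in> S" for x
  proof -
    obtain d where d: "d \<in> D" and orth: "\<And>y. y \<in> D \<Longrightarrow> trace_on D (\<lambda>v. br (x + d) (br y v)) = 0"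
      using trace_form_derived_represents[OF x] by blast
    define w where "w = x + d"
    have wS: "w \<in> S"
      unfolding w_def using x d D_sub subspace_add[OF S] by blast
    have "br w y = 0" if y: "y \<in> D" for y
    proof -
      have wy: "br w y \<in> D"
        by (rule D_ideal[OF wS y])
      define z where "z = \<sigma> (br w y)"
      have z: "z \<in> D"
        unfolding z_def by (rule lie_involution_mem[OF \<sigma>_inv wy])
      have "killing br D (br w y) z = trace_on D (\<lambda>v. br w (br (br y z) v))"
        unfolding killing_def
        by (rule trace_on_bracket_invariant[OF subspace_derived])
          (use D_ideal[OF wS] D_bracket y z in auto)
      also have "\<dots> = 0"
        using orth[OF D_bracket[OF y z]] unfolding w_def .
      finally show ?thesis
        using killing_derived_definite[OF wy] z_def by simp
    qed
    then have "w = 0"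
      using centralizer_derived_trivial[OF ss wS] by blast
    then have "x = - d"
      unfolding w_def by (simp add: eq_neg_iff_add_eq_0)
    then show "x \<in> D"
      using subspace_neg[OF subspace_derived d] by simp
  qed
  with D_sub show ?thesis
    by blast
qed

end

lemma derived_eq_self_if_cartan:
  assumes "subspace S" and "\<And>x y. x \<in> S \<Longrightarrow> y \<in> S \<Longrightarrow> br x y \<in> S"
    and "semisimple br S" and "cartan_involution br S \<theta>"
  shows "derived br S = S"
  using derived_eq_self_if_cartan_derived[OF assms(1,2) cartan_involution_derived[OF assms(1,2,4)]
      assms(3)] .

end

section \<open>The map \<open>\<Phi>\<close> and its inverse\<close>

definition Phi_inv :: "(complex^'n \<Rightarrow> complex^'n \<Rightarrow> complex^'n)
     \<Rightarrow> (complex^'n) set \<times> (complex^'n \<Rightarrow> complex^'n) \<times> (complex^'n)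
     \<Rightarrow> (complex^'n) set \<times> (complex^'n \<Rightarrow> complex^'n) \<times> (complex^'n)" where
  "Phi_inv br = (\<lambda>(g, \<tau>, z). (twisted_form g \<tau>,
     (\<lambda>v. if v \<in> twisted_form g \<tau> then exp_ad br pi z (rf_conj g v) else 0), - (\<i> *s z)))"

context complex_lie_algebra
begin

lemma Phi_eq:
  assumes rf: "real_form br S"
    and inv: "lie_involution br S (\<lambda>v. if v \<in> S then tau_h br S h (\<theta> v) else 0)"
  defines "\<tau> \<equiv> \<lambda>v. if v \<in> S then tau_h br S h (\<theta> v) else 0"
  shows "Phi br (S, \<theta>, h) =
    (twisted_form S \<tau>, (\<lambda>v. if v \<in> twisted_form S \<tau> then rf_conj S v else 0), \<i> *s h)"
proof -
  have the: "(THE w. \<exists>x y. x \<in> S \<and> \<tau> x = x \<and> y \<in> S \<and> \<tau> y = - y \<and> v = x + \<i> *s y \<and> w = x - \<i> *s y)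
      = rf_conj S v" if v: "v \<in> twisted_form S \<tau>" for v
  proof (rule the_equality)
    have "\<tau> (rf_re S v) = rf_re S v" "\<tau> (rf_im S v) = - rf_im S v"
      using mem_twisted_form_iff[OF rf inv[folded \<tau>_def]] v by auto
    then show "\<exists>x y. x \<in> S \<and> \<tau> x = x \<and> y \<in> S \<and> \<tau> y = - y \<and>
        v = x + \<i> *s y \<and> rf_conj S v = x - \<i> *s y"
      using rf_parts[OF rf, of v] unfolding rf_conj_def by blast
  next
    fix w assume "\<exists>x y. x \<in> S \<and> \<tau> x = x \<and> y \<in> S \<and> \<tau> y = - y \<and> v = x + \<i> *s y \<and> w = x - \<i> *s y"
    then obtain x y where xy: "x \<in> S" "y \<in> S" "v = x + \<i> *s y" "w = x - \<i> *s y"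
      by blast
    then show "w = rf_conj S v"
      using rf_parts_unique[OF rf] by (simp add: rf_conj_def)
  qed
  show ?thesis
    unfolding Phi_def Let_def prod.case \<tau>_def twisted_form_def
    by (intro arg_cong2[where f = Pair] refl ext if_cong[OF refl _ refl]
        the[unfolded \<tau>_def twisted_form_def])
qed

lemma killing_zero_left: "subspace S \<Longrightarrow> killing br S 0 y = 0"
  unfolding killing_def using trace_on_zero[of S] by simp

text \<open>For \<open>x = a + i b\<close> the Killing form of the twisted form splits as
  \<open>B(x, \<sigma> x) = B(a, \<theta> a) + B(b, \<theta> b)\<close>.\<close>

lemma cartan_involution_twisted:
  assumes rfS: "real_form br S" and rfT: "real_form br T" and cart: "cartan_involution br S \<theta>"
    and inv: "lie_involution br T \<sigma>"
    and \<sigma>: "\<And>x. x \<in> T \<Longrightarrow> \<sigma> x = \<theta> (rf_re S x) - \<i> *s \<theta> (rf_im S x)"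
  shows "cartan_involution br T \<sigma>"
  unfolding cartan_involution_def
proof (intro conjI inv ballI impI)
  fix x assume x: "x \<in> T" and "x \<noteq> 0"
  define a b where "a = rf_re S x" "b = rf_im S x"
  have ab: "a \<in> S" "b \<in> S" "x = a + \<i> *s b"
    unfolding a_b_def by (simp_all add: rf_parts[OF rfS] flip: rf_decomp[OF rfS])
  have \<theta>: "lie_involution br S \<theta>"
    using cart by (simp add: cartan_involution_def)
  have \<theta>ab: "\<theta> a \<in> S" "- \<theta> b \<in> S"
    using lie_involution_mem[OF \<theta>] ab subspace_neg[OF real_form_subspace[OF rfS]] by auto
  have "\<sigma> x = \<theta> a + \<i> *s (- \<theta> b)"
    using \<sigma>[OF x] a_b_def by simp
  then have "rf_re S (\<sigma> x) = \<theta> a" "rf_im S (\<sigma> x) = - \<theta> b"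
    using rf_parts_unique[OF rfS \<theta>ab] by auto
  then have "killing br T x (\<sigma> x) = killing br S a (\<theta> a) - killing br S b (- \<theta> b)"
    using killing_real_form_parts[OF rfS rfT x lie_involution_mem[OF inv x]] a_b_def by simp
  also have "\<dots> = killing br S a (\<theta> a) + killing br S b (\<theta> b)"
    using killing_neg_right[OF real_form_subspace[OF rfS] real_form_bracket[OF rfS] ab(2)
        lie_involution_mem[OF \<theta> ab(2)]] by simp
  finally have K: "killing br T x (\<sigma> x) = killing br S a (\<theta> a) + killing br S b (\<theta> b)" .
  have nonneg: "- killing br S u (\<theta> u) \<ge> 0" if "u \<in> S" for u
    using cart that killing_zero_left[OF real_form_subspace[OF rfS]]
    unfolding cartan_involution_def by (cases "u = 0") force+
  have "a \<noteq> 0 \<or> b \<noteq> 0"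
    using \<open>x \<noteq> 0\<close> ab(3) by auto
  then have "- killing br S a (\<theta> a) > 0 \<or> - killing br S b (\<theta> b) > 0"
    using cart ab unfolding cartan_involution_def by blast
  then show "- killing br T x (\<sigma> x) > 0"
    unfolding K using nonneg[OF ab(1)] nonneg[OF ab(2)] by linarith
qed

lemma rf_conj_tau_euler:
  assumes "real_form br S"
  shows "rf_conj S (tau_euler br h v) = tau_euler br (rf_conj S h) (rf_conj S v)"
  by (simp add: tau_euler_def rf_conj_diff[OF assms] rf_conj_scaleR[OF assms]
      rf_conj_bracket[OF assms])

lemma lie_involution_tau_euler_comm:
  assumes rf: "real_form br S" and \<theta>: "lie_involution br S \<theta>" and h: "h \<in> S" and \<theta>h: "\<theta> h = - h"
    and v: "v \<in> S"
  shows "\<theta> (tau_euler br h v) = tau_euler br h (\<theta> v)"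
proof -
  have hv: "br h v \<in> S" "br h (br h v) \<in> S"
    using real_form_bracket[OF rf] h v by auto
  then show ?thesis
    using v h \<theta>h subspace_scale[OF real_form_subspace[OF rf]]
    by (simp add: tau_euler_def lie_involution_diff[OF \<theta> real_form_subspace[OF rf]]
        lie_involution_scaleR[OF \<theta>] lie_involution_bracket[OF \<theta>])
qed

end

context complex_lie_algebra
begin

context
  fixes g \<theta> h
  assumes A: "(g, \<theta>, h) \<in> setA br"
begin

private lemma A_facts: "real_form br g" "semisimple br g" "euler_elem br g h"
  "cartan_involution br g \<theta>" "\<theta> h = - h" "extensional0 g \<theta>"
  using A by (simp_all add: setA_def)

private lemmas A_rf = A_facts(1) and \<theta>_cartan = A_facts(4)
  and A_subspace = real_form_subspace[OF A_facts(1)]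
  and A_bracket = real_form_bracket[OF A_facts(1)]

private lemma h_mem: "h \<in> g"
  using A_facts(3) by (simp add: euler_elem_def)

private lemma \<theta>_inv: "lie_involution br g \<theta>"
  using \<theta>_cartan by (simp add: cartan_involution_def)

private lemma euler_UNIV: "euler_elem br UNIV h"
  using A_facts(3) euler_elem_real_form_iff[OF A_rf h_mem] by simp

private lemma A_cube: "br h (br h (br h v)) = br h v"
  using euler_elem_cube[OF euler_UNIV] by simp

private lemma tau_euler_inv: "lie_involution br g (tau_euler br h)"
  by (rule lie_involution_tau_euler[OF A_cube tau_euler_mem[OF A_subspace A_bracket h_mem]])

private definition "\<tau> = (\<lambda>v. if v \<in> g then tau_h br g h (\<theta> v) else 0)"

private lemma \<tau>_eq: "v \<in> g \<Longrightarrow> \<tau> v = tau_euler br h (\<theta> v)"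
  unfolding \<tau>_def using tau_h_eq_tau_euler[OF A_facts(3)] lie_involution_mem[OF \<theta>_inv] by simp

private lemma \<tau>_inv: "lie_involution br g \<tau>"
  by (rule lie_involution_cong[OF lie_involution_comp[OF tau_euler_inv \<theta>_inv] \<tau>_eq
        A_subspace A_bracket])
    (use lie_involution_tau_euler_comm[OF A_rf \<theta>_inv h_mem A_facts(5)] in auto)

private definition "gc = twisted_form g \<tau>"

private lemma rf_gc: "real_form br gc"
  unfolding gc_def by (rule real_form_twisted_form[OF A_rf \<tau>_inv])

private lemma ih_mem: "\<i> *s h \<in> gc"
  unfolding gc_def using anti_fixed_in_twisted_form[OF A_rf \<tau>_inv h_mem] \<tau>_eq[OF h_mem] A_facts(5)
  by (simp add: tau_euler_def)

private lemma exp_ad_ih: "exp_ad br pi (\<i> *s h) = tau_euler br h"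
  using exp_ad_pi_eq_tau_euler euler_elem_uminus[OF subspace_UNIV euler_UNIV] by simp

private lemma tau_euler_gc: "v \<in> gc \<Longrightarrow> tau_euler br h v \<in> gc"
proof -
  assume v: "v \<in> gc"
  then have "br (\<i> *s h) (br (\<i> *s h) v) \<in> gc"
    using ih_mem real_form_bracket[OF rf_gc] by blast
  with v have "v + 2 *\<^sub>R br (\<i> *s h) (br (\<i> *s h) v) \<in> gc"
    by (intro subspace_add subspace_scale real_form_subspace[OF rf_gc])
  then show ?thesis
    by (simp add: tau_euler_def)
qed

text \<open>On the twisted form, \<open>\<tau>\<^sub>h\<close> is the Cartan involution \<open>a + i b \<mapsto> \<theta> a - i \<theta> b\<close>, because
  \<open>\<tau> = \<tau>\<^sub>h \<theta>\<close> fixes \<open>a\<close> and negates \<open>b\<close>.\<close>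

private lemma cartan_gc: "cartan_involution br gc (tau_euler br h)"
proof (rule cartan_involution_twisted[OF A_rf rf_gc \<theta>_cartan])
  show "lie_involution br gc (tau_euler br h)"
    by (rule lie_involution_tau_euler[OF A_cube tau_euler_gc])
next
  fix x assume "x \<in> gc"
  define a b where "a = rf_re g x" "b = rf_im g x"
  have ab: "a \<in> g" "b \<in> g" "x = a + \<i> *s b"
    unfolding a_b_def by (simp_all add: rf_parts[OF A_rf] flip: rf_decomp[OF A_rf])
  have "tau_euler br h (\<theta> a) = a" "tau_euler br h (\<theta> b) = - b"
    using \<open>x \<in> gc\<close> mem_twisted_form_iff[OF A_rf \<tau>_inv] \<tau>_eq ab unfolding gc_def a_b_def by auto
  then have "\<theta> a = tau_euler br h a" "\<theta> b = - tau_euler br h b"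
    using tau_euler_involutive[OF A_cube] by (metis tau_euler_neg)+
  then have "tau_euler br h x = \<theta> a - \<i> *s \<theta> b"
    unfolding ab(3) by (simp add: tau_euler_linear)
  then show "tau_euler br h x = \<theta> (rf_re g x) - \<i> *s \<theta> (rf_im g x)"
    by (simp add: a_b_def)
qed

private lemma Phi_A: "Phi br (g, \<theta>, h) = (gc, (\<lambda>v. if v \<in> gc then rf_conj g v else 0), \<i> *s h)"
  using Phi_eq[OF A_rf \<tau>_inv[unfolded \<tau>_def]] unfolding gc_def \<tau>_def by simp

lemma Phi_mem_setB: "Phi br (g, \<theta>, h) \<in> setB br"
proof -
  have "derived br g = g"
    by (rule derived_eq_self_if_cartan[OF A_subspace A_bracket A_facts(2) \<theta>_cartan])
  then have "derived br gc = gc"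
    by (rule perfect_real_form_transfer[OF A_rf rf_gc])
  then have "H_elem br gc (\<i> *s h)"
    unfolding H_elem_def using ih_mem euler_elem_uminus[OF subspace_UNIV euler_UNIV] exp_ad_ih
      cartan_gc
    by simp
  moreover have "lie_involution br gc (\<lambda>v. if v \<in> gc then rf_conj g v else 0)"
    by (rule lie_involution_cong[OF lie_involution_rf_conj_twisted_form[OF A_rf \<tau>_inv,
          folded gc_def] _ real_form_subspace[OF rf_gc] real_form_bracket[OF rf_gc]]) simp
  moreover have "rf_conj g (\<i> *s h) = - (\<i> *s h)"
    by (rule rf_conj_imag[OF A_rf h_mem])
  ultimately show ?thesis
    unfolding Phi_A setB_def extensional0_def
    using rf_gc semisimple_real_form_transfer[OF A_rf rf_gc A_facts(2)] ih_mem by simp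
qed

lemma Phi_inv_Phi: "Phi_inv br (Phi br (g, \<theta>, h)) = (g, \<theta>, h)"
proof -
  have "twisted_form gc (\<lambda>v. if v \<in> gc then rf_conj g v else 0) = g"
    using twisted_form_cong[of gc _ "rf_conj g"] twisted_form_twisted_form[OF A_rf \<tau>_inv]
    unfolding gc_def by simp
  moreover have "(\<lambda>v. if v \<in> g then exp_ad br pi (\<i> *s h) (rf_conj gc v) else 0) = \<theta>"
  proof
    fix v
    show "(if v \<in> g then exp_ad br pi (\<i> *s h) (rf_conj gc v) else 0) = \<theta> v"
    proof (cases "v \<in> g")
      case True
      then have "rf_conj gc v = tau_euler br h (\<theta> v)"
        unfolding gc_def using rf_conj_twisted_form[OF A_rf \<tau>_inv] \<tau>_eq by simp
      then show ?thesis
        using True exp_ad_ih tau_euler_involutive[OF A_cube] by simp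
    next
      case False
      then show ?thesis
        using A_facts(6) by (simp add: extensional0_def)
    qed
  qed
  ultimately show ?thesis
    unfolding Phi_A Phi_inv_def by simp
qed

end

end

context complex_lie_algebra
begin

context
  fixes g \<tau> z
  assumes B: "(g, \<tau>, z) \<in> setB br"
begin

private lemma B_facts: "real_form br g" "semisimple br g" "H_elem br g z" "lie_involution br g \<tau>"
  "\<tau> z = - z" "extensional0 g \<tau>"
  using B by (simp_all add: setB_def)

private lemmas B_rf = B_facts(1) and B_\<tau>_inv = B_facts(4)
  and B_subspace = real_form_subspace[OF B_facts(1)]
  and B_bracket = real_form_bracket[OF B_facts(1)]

private lemma z_mem: "z \<in> g"
  using B_facts(3) by (simp add: H_elem_def)

private lemma euler_iz: "euler_elem br UNIV (\<i> *s z)"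
  using B_facts(3) by (simp add: H_elem_def)

private lemma exp_ad_z: "exp_ad br pi z = tau_euler br (\<i> *s z)"
  by (rule exp_ad_pi_eq_tau_euler[OF euler_iz])

private lemma B_cube: "br (\<i> *s z) (br (\<i> *s z) (br (\<i> *s z) v)) = br (\<i> *s z) v"
  using euler_elem_cube[OF euler_iz] by simp

private lemma cartan_exp_ad: "cartan_involution br g (exp_ad br pi z)"
proof -
  have "cartan_involution br (derived br g) (exp_ad br pi z)"
    using B_facts(3) by (simp add: H_elem_def)
  moreover from this have "derived br g = g"
    using derived_eq_self_if_cartan_derived[OF B_subspace B_bracket]
      B_facts(2) by blast
  ultimately show ?thesis
    by simp
qed

private definition "gB = twisted_form g \<tau>"

private definition "\<theta>B = (\<lambda>v. if v \<in> gB then exp_ad br pi z (rf_conj g v) else 0)"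

private lemma Phi_inv_B: "Phi_inv br (g, \<tau>, z) = (gB, \<theta>B, - (\<i> *s z))"
  unfolding Phi_inv_def gB_def \<theta>B_def by simp

private lemma rf_gB: "real_form br gB"
  unfolding gB_def by (rule real_form_twisted_form[OF B_rf B_\<tau>_inv])

private lemma hB_mem: "- (\<i> *s z) \<in> gB"
  using anti_fixed_in_twisted_form[OF B_rf B_\<tau>_inv, of "- z"] z_mem B_facts(5)
    subspace_neg[OF B_subspace] lie_involution_neg[OF B_\<tau>_inv z_mem]
  unfolding gB_def by simp

private lemma euler_gB: "euler_elem br gB (- (\<i> *s z))"
  using euler_elem_real_form_iff[OF rf_gB hB_mem] euler_elem_uminus[OF subspace_UNIV euler_iz]
  by simp

private lemma tau_euler_gB: "lie_involution br gB (tau_euler br (\<i> *s z))"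
  using lie_involution_tau_euler[OF B_cube tau_euler_mem[OF real_form_subspace[OF rf_gB]
        real_form_bracket[OF rf_gB] hB_mem, unfolded tau_euler_uminus]] .

private lemma \<theta>B_eq: "v \<in> gB \<Longrightarrow> \<theta>B v = tau_euler br (\<i> *s z) (rf_conj g v)"
  unfolding \<theta>B_def exp_ad_z by simp

private lemma \<theta>B_inv: "lie_involution br gB \<theta>B"
proof (rule lie_involution_cong[OF lie_involution_comp[OF tau_euler_gB] \<theta>B_eq
      real_form_subspace[OF rf_gB] real_form_bracket[OF rf_gB]])
  show "lie_involution br gB (rf_conj g)"
    unfolding gB_def by (rule lie_involution_rf_conj_twisted_form[OF B_rf B_\<tau>_inv])
  show "tau_euler br (\<i> *s z) (rf_conj g v) = rf_conj g (tau_euler br (\<i> *s z) v)" for v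
    using rf_conj_tau_euler[OF B_rf] rf_conj_imag[OF B_rf z_mem] by simp
qed

private lemma cartan_gB: "cartan_involution br gB \<theta>B"
proof (rule cartan_involution_twisted[OF B_rf rf_gB cartan_exp_ad \<theta>B_inv])
  fix x assume "x \<in> gB"
  have "rf_conj g x = rf_re g x + \<i> *s (- rf_im g x)"
    by (simp add: rf_conj_def)
  then show "\<theta>B x = exp_ad br pi z (rf_re g x) - \<i> *s exp_ad br pi z (rf_im g x)"
    using \<theta>B_eq[OF \<open>x \<in> gB\<close>] by (simp add: exp_ad_z tau_euler_linear)
qed

private lemma \<theta>B_hB: "\<theta>B (- (\<i> *s z)) = \<i> *s z"
  using \<theta>B_eq[OF hB_mem] rf_conj_imag[OF B_rf z_mem]
  by (simp add: rf_conj_neg[OF B_rf] tau_euler_def)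

lemma Phi_inv_mem_setA: "Phi_inv br (g, \<tau>, z) \<in> setA br"
  unfolding Phi_inv_B setA_def
  using rf_gB semisimple_real_form_transfer[OF B_rf rf_gB B_facts(2)] euler_gB cartan_gB \<theta>B_hB
  by (simp add: extensional0_def \<theta>B_def)

lemma Phi_Phi_inv: "Phi br (Phi_inv br (g, \<tau>, z)) = (g, \<tau>, z)"
proof -
  define \<tau>B where "\<tau>B = (\<lambda>v. if v \<in> gB then tau_h br gB (- (\<i> *s z)) (\<theta>B v) else 0)"
  have \<tau>B_eq: "\<tau>B v = (if v \<in> gB then rf_conj g v else 0)" for v
    using tau_h_eq_tau_euler[OF euler_gB] lie_involution_mem[OF \<theta>B_inv] \<theta>B_eq
      tau_euler_involutive[OF B_cube] unfolding \<tau>B_def by auto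
  have "lie_involution br gB \<tau>B"
    by (rule lie_involution_cong[OF lie_involution_rf_conj_twisted_form[OF B_rf B_\<tau>_inv,
          folded gB_def] _ real_form_subspace[OF rf_gB] real_form_bracket[OF rf_gB]])
      (simp add: \<tau>B_eq)
  from Phi_eq[OF rf_gB this[unfolded \<tau>B_def]]
  have "Phi br (gB, \<theta>B, - (\<i> *s z)) =
      (twisted_form gB \<tau>B, \<lambda>v. if v \<in> twisted_form gB \<tau>B then rf_conj gB v else 0, z)"
    unfolding \<tau>B_def by simp
  moreover have "twisted_form gB \<tau>B = g"
    using twisted_form_cong[of gB \<tau>B "rf_conj g"] twisted_form_twisted_form[OF B_rf B_\<tau>_inv] \<tau>B_eq
    unfolding gB_def by simp
  moreover have "(\<lambda>v. if v \<in> g then rf_conj gB v else 0) = \<tau>"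
    using rf_conj_twisted_form[OF B_rf B_\<tau>_inv] B_facts(6) unfolding gB_def extensional0_def by auto
  ultimately show ?thesis
    unfolding Phi_inv_B by simp
qed

end

end

theorem lemma3p10:
  fixes br :: "complex^'n \<Rightarrow> complex^'n \<Rightarrow> complex^'n"
  assumes "complex_lie br"
  shows "bij_betw (Phi br) (setA br) (setB br)"
proof -
  interpret complex_lie_algebra br
    by unfold_locales (rule assms)
  show ?thesis
  proof (rule bij_betw_byWitness[where f' = "Phi_inv br"])
    show "\<forall>a\<in>setA br. Phi_inv br (Phi br a) = a" "Phi br ` setA br \<subseteq> setB br"
      using Phi_inv_Phi Phi_mem_setB by auto
    show "\<forall>b\<in>setB br. Phi br (Phi_inv br b) = b" "Phi_inv br ` setB br \<subseteq> setA br"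
      using Phi_Phi_inv Phi_inv_mem_setA by auto
  qed
qed

end
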